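(* Let $r,s\ge0$, $\Delta=(v(y_1),\dots,v(y_n))$, $F\subset\{1,\dots,n\}$ with $r+2s+|F|=|\Delta|-1$, and let $\mathcal{P}$ be a collection of conditions in general position for $\mathrm{ev}_F$ on the closure $\mathcal{M}^{desc}_{(r,s)}(\Delta)$ of refined descendant curves and on $\mathcal{M}^{rB}_{(r,s)}(\Delta,F)$. Then $$N^{desc}_{(r,s)}(y,\Delta,F,\mathcal{P})=N^{rB}_{(r,s)}(y,\Delta,F,\mathcal{P}).$$
   Context: Curves. An $(r,s)$-marked curve of degree $\Delta$ is $C=(\Gamma,h,x_1,\dots,x_{r+s})$ with $\Gamma$ a metric graph whose components are trees, $h:\Gamma\to\mathbb{R}^2$ continuous, affine with integral direction vectors on edges, balanced at vertices; $x_1,\dots,x_r$ (real) and $x_{r+1},\dots,x_{r+s}$ (complex) are contracted unbounded edges (markings), the other unbounded edges $y_1,\dots,y_n$ (labeled ends) have outward direction vectors $\Delta=(v(y_1),\dots,v(y_n))$. Weight $w(e)$ = gcd of coordinates of direction vector. Mikhalkin multiplicity of a vertex with exactly three non-contracted edges of direction vectors $u,v,w$: $a=|\det(u,v)|$. $\mathcal{M}_{(r,s)}(\Delta)$ is the polyhedral complex of connected such curves. An oriented curve carries orientations of non-contracted edges; $F=\{i: y_i\text{ inward}\}$ (fixed ends); $\mathcal{M}^{or}_{(r,s)}(\Delta,F)$ the connected oriented curves with fixed ends $F$. $\mathrm{ev}_F(C)=(h(x_1),\dots,h(x_{r+s}),(h(y_i))_{i\in F})$; general position for $\mathrm{ev}_F$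 on a subcomplex $M$ means avoiding images of cells of $M$ whose image has dimension $<2(r+s)+|F|$. $G(\Delta,F)$: permutations of $\{1,\dots,n\}$ fixing $F$ pointwise and preserving $v(y_i)$. Oriented refined broccoli curve: vertices of types (I) real marking, two outgoing non-contracted edges, $m_V(y)=1$; (II) unmarked 3-valent, two in one out, $m_V(y)=\frac{y^{a/2}-y^{-a/2}}{y^{1/2}-y^{-1/2}}$; (III) complex marking, three outgoing non-contracted edges, $m_V(y)=\frac{y^{a/2}+y^{-a/2}}{y^{1/2}+y^{-1/2}}$. Unoriented refined broccoli curve: vertices of types (I') 3-valent with real marking, $m_V(y)=1$; (II') 3-valent unmarked, $m_V(y)=\frac{y^{a/2}-y^{-a/2}}{y^{1/2}-y^{-1/2}}$; (III') 4-valent with complex marking, $m_V(y)=\frac{y^{a/2}+y^{-a/2}}{y^{1/2}+y^{-1/2}}$. End factors: $m_{y_i}(y)=\frac{y^{w(y_i)/2}+(-1)^{w(y_i)}y^{-w(y_i)/2}}{y^{1/2}+(-1)^{w(y_i)}y^{-1/2}}$ for $i\in F$ and $m_{y_i}(y)=\frac{y^{w(y_i)/2}-(-1)^{w(y_i)}y^{-w(y_i)/2}}{w(y_i)(y^{1/2}-(-1)^{w(y_i)}y^{-1/2})}$ for $i\notin F$; $m_C(y)=\prod_i m_{y_i}(y)\prod_V m_V(y)$. $\mathcal{M}^{rB}_{(r,s)}(\Delta,F)$ is the closure of oriented refined broccoli curves in $\mathcal{M}^{or}_{(r,s)}(\Delta,F)$ and $N^{rB}_{(r,s)}(y,\Delta,F,\mathcal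 P)=\frac{1}{|G(\Delta,F)|}\sum m_C(y)$ over oriented refined broccoli curves $C$ with $\mathrm{ev}_F(C)=\mathcal P$. Refined descendant curve: a curve in $\mathcal{M}_{(r,s)}(\Delta)$ whose real markings are each adjacent to a 3-valent vertex of $\Gamma$ and whose complex markings are each adjacent to a 4-valent vertex of $\Gamma$. For $\mathcal{P}$ in general position, the refined descendant curves through $\mathcal{P}$ are exactly the unoriented refined broccoli curves through $\mathcal{P}$. $N^{desc}_{(r,s)}(y,\Delta,F,\mathcal{P})=\frac{1}{|G(\Delta,F)|}\sum_C m_C(y)$, summing over refined descendant curves $C$ with $\mathrm{ev}_F(C)=\mathcal P$, where $m_C(y)$ is the multiplicity of $C$ as an unoriented refined broccoli curve (with respect to $F$). *)

theory Defs
  imports "HOL-Analysis.Analysis" "HOL-Combinatorics.Permutations"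
begin

section \<open>Tropical (r,s)-marked curves, encoded by splits (leaf-labelled trees)\<close>

text \<open>Leaves of the abstract tree: markings x_1..x_{r+s} are Mk 0 .. Mk (r+s-1)
  (Mk i real iff i < r, complex iff r <= i < r+s); ends y_1..y_n are En 0 .. En (n-1),
  with outward direction vector Delta ! i.  The end En 0 is used as a reference leaf.\<close>

datatype leaf = Mk nat | En nat

type_synonym ivec = "int \<times> int"
type_synonym pt = "real \<times> real"

definition leaves :: "nat \<Rightarrow> nat \<Rightarrow> nat \<Rightarrow> leaf set" where
  "leaves r s n = Mk ` {..<r+s} \<union> En ` {..<n}"

definition refl_leaf :: leaf where "refl_leaf = En 0"

text \<open>Side of the reference end edge not containing the reference leaf (the root vertex).\<close>
definition root :: "nat \<Rightarrow> nat \<Rightarrow> nat \<Rightarrow> leaf set" where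
  "root r s n = leaves r s n - {refl_leaf}"

definition vdir :: "ivec list \<Rightarrow> leaf \<Rightarrow> ivec" where
  "vdir D l = (case l of Mk i \<Rightarrow> (0,0) | En i \<Rightarrow> D ! i)"

text \<open>sigma A = sum of outward directions of the leaves in A = direction vector of the edge
  with lower side A, oriented away from the reference leaf.\<close>
definition sigma :: "ivec list \<Rightarrow> leaf set \<Rightarrow> ivec" where
  "sigma D A = ((\<Sum>l\<in>A. fst (vdir D l)), (\<Sum>l\<in>A. snd (vdir D l)))"

definition idet :: "ivec \<Rightarrow> ivec \<Rightarrow> int" where
  "idet u v = fst u * snd v - snd u * fst v"

definition wt :: "ivec \<Rightarrow> nat" where
  "wt v = nat (gcd (fst v) (snd v))"

definition is_split :: "nat \<Rightarrow> nat \<Rightarrow> nat \<Rightarrow> leaf set \<Rightarrow> bool" where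
  "is_split r s n A \<longleftrightarrow> A \<subseteq> root r s n \<and> 2 \<le> card A \<and> card A + 2 \<le> card (leaves r s n)"

text \<open>A curve is a pair (eta, b): eta assigns to each split (bounded edge, identified with its side
  not containing the reference leaf) its (signed) length, 0 if the split is not an edge; b is the
  position h of the root vertex.  For oriented curves the sign of eta on a non-contracted bounded
  edge encodes its orientation (positive = pointing away from the reference leaf).\<close>
type_synonym curve = "(leaf set \<Rightarrow> real) \<times> pt"

definition edgesS :: "curve \<Rightarrow> leaf set set" where
  "edgesS C = {A. fst C A \<noteq> 0}"

definition is_curve_data :: "nat \<Rightarrow> nat \<Rightarrow> ivec list \<Rightarrow> curve \<Rightarrow> bool" where
  "is_curve_data r s D C \<longleftrightarrow>
     (\<forall>v\<in>set D. v \<noteq> (0,0)) \<and> sigma D (leaves r s (length D)) = (0,0) \<and>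
     3 \<le> card (leaves r s (length D)) \<and>
     (\<forall>A\<in>edgesS C. is_split r s (length D) A) \<and>
     (\<forall>A\<in>edgesS C. \<forall>B\<in>edgesS C. A \<inter> B = {} \<or> A \<subseteq> B \<or> B \<subseteq> A)"

definition is_curve :: "nat \<Rightarrow> nat \<Rightarrow> ivec list \<Rightarrow> curve \<Rightarrow> bool" where
  "is_curve r s D C \<longleftrightarrow> is_curve_data r s D C \<and> (\<forall>A. fst C A \<ge> 0)"

text \<open>Elements of M^or_(r,s)(Delta,F): contracted bounded edges carry no orientation.\<close>
definition is_or_curve :: "nat \<Rightarrow> nat \<Rightarrow> ivec list \<Rightarrow> curve \<Rightarrow> bool" where
  "is_or_curve r s D C \<longleftrightarrow> is_curve_data r s D C \<and>
     (\<forall>A. sigma D A = (0,0) \<longrightarrow> fst C A \<ge> 0)"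

text \<open>Vertices: the root and one vertex below each bounded edge (the edge is its parent edge).\<close>
definition verts :: "nat \<Rightarrow> nat \<Rightarrow> nat \<Rightarrow> curve \<Rightarrow> leaf set set" where
  "verts r s n C = insert (root r s n) (edgesS C)"

text \<open>Child edges of vertex V (identified by their lower side).\<close>
definition children :: "curve \<Rightarrow> leaf set \<Rightarrow> leaf set set" where
  "children C V = {E \<in> edgesS C \<union> {{l} | l. l \<in> V}. E \<subset> V \<and>
      \<not> (\<exists>E'\<in>edgesS C. E \<subset> E' \<and> E' \<subset> V)}"

definition edges_at :: "curve \<Rightarrow> leaf set \<Rightarrow> leaf set set" where
  "edges_at C V = insert V (children C V)"

definition noncontr_at :: "ivec list \<Rightarrow> curve \<Rightarrow> leaf set \<Rightarrow> leaf set set" where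
  "noncontr_at D C V = {E \<in> edges_at C V. sigma D E \<noteq> (0,0)}"

definition has_real_mark :: "nat \<Rightarrow> curve \<Rightarrow> leaf set \<Rightarrow> bool" where
  "has_real_mark r C V \<longleftrightarrow> (\<exists>i<r. {Mk i} \<in> children C V)"

definition has_cplx_mark :: "nat \<Rightarrow> nat \<Rightarrow> curve \<Rightarrow> leaf set \<Rightarrow> bool" where
  "has_cplx_mark r s C V \<longleftrightarrow> (\<exists>i. r \<le> i \<and> i < r + s \<and> {Mk i} \<in> children C V)"

definition has_mark :: "curve \<Rightarrow> leaf set \<Rightarrow> bool" where
  "has_mark C V \<longleftrightarrow> (\<exists>i. {Mk i} \<in> children C V)"

text \<open>Mikhalkin multiplicity a = |det(u,v)| for two of the non-contracted edges at V.\<close>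
definition mik :: "ivec list \<Rightarrow> curve \<Rightarrow> leaf set \<Rightarrow> int" where
  "mik D C V = Max {\<bar>idet (sigma D E) (sigma D E')\<bar> | E E'.
       E \<in> noncontr_at D C V \<and> E' \<in> noncontr_at D C V}"

text \<open>Orientation: does the (non-contracted) edge E point towards the reference leaf?
  Ends En i (i > 0) point inward iff they point to the reference side; the reference end
  (edge with lower side root) is inward iff it points away.\<close>
definition up :: "nat \<Rightarrow> nat \<Rightarrow> ivec list \<Rightarrow> nat set \<Rightarrow> curve \<Rightarrow> leaf set \<Rightarrow> bool" where
  "up r s D F C E =
     (if E = root r s (length D) then 0 \<notin> F
      else if (\<exists>i. E = {En i}) then (\<exists>i\<in>F. E = {En i})
      else fst C E < 0)"

definition outgoing :: "nat \<Rightarrow> nat \<Rightarrow> ivec list \<Rightarrow> nat set \<Rightarrow> curve \<Rightarrow> leaf set \<Rightarrow> leaf set \<Rightarrow> bool" where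
  "outgoing r s D F C V E \<longleftrightarrow>
     (E = V \<and> up r s D F C E) \<or> (E \<in> children C V \<and> \<not> up r s D F C E)"

section \<open>Refined multiplicities (y real, y > 0, y ~= 1)\<close>

definition qminus :: "real \<Rightarrow> real \<Rightarrow> real" where
  "qminus a y = (y powr (a/2) - y powr (-a/2)) / (y powr (1/2) - y powr (-1/2))"

definition qplus :: "real \<Rightarrow> real \<Rightarrow> real" where
  "qplus a y = (y powr (a/2) + y powr (-a/2)) / (y powr (1/2) + y powr (-1/2))"

definition end_mult :: "ivec list \<Rightarrow> nat set \<Rightarrow> real \<Rightarrow> nat \<Rightarrow> real" where
  "end_mult D F y i = (let w = wt (D ! i) in
     if i \<in> F then
       (y powr (real w/2) + (-1)^w * y powr (- real w/2)) /
       (y powr (1/2) + (-1)^w * y powr (-1/2))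
     else
       (y powr (real w/2) - (-1)^w * y powr (- real w/2)) /
       (real w * (y powr (1/2) - (-1)^w * y powr (-1/2))))"

definition typeI :: "nat \<Rightarrow> nat \<Rightarrow> ivec list \<Rightarrow> nat set \<Rightarrow> curve \<Rightarrow> leaf set \<Rightarrow> bool" where
  "typeI r s D F C V \<longleftrightarrow> has_real_mark r C V \<and> card (edges_at C V) = 3 \<and>
     card (noncontr_at D C V) = 2 \<and> (\<forall>E\<in>noncontr_at D C V. outgoing r s D F C V E)"

definition typeII :: "nat \<Rightarrow> nat \<Rightarrow> ivec list \<Rightarrow> nat set \<Rightarrow> curve \<Rightarrow> leaf set \<Rightarrow> bool" where
  "typeII r s D F C V \<longleftrightarrow> \<not> has_mark C V \<and> card (edges_at C V) = 3 \<and>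
     card (noncontr_at D C V) = 3 \<and>
     card {E\<in>noncontr_at D C V. outgoing r s D F C V E} = 1"

definition typeIII :: "nat \<Rightarrow> nat \<Rightarrow> ivec list \<Rightarrow> nat set \<Rightarrow> curve \<Rightarrow> leaf set \<Rightarrow> bool" where
  "typeIII r s D F C V \<longleftrightarrow> has_cplx_mark r s C V \<and> card (edges_at C V) = 4 \<and>
     card (noncontr_at D C V) = 3 \<and> (\<forall>E\<in>noncontr_at D C V. outgoing r s D F C V E)"

definition is_rbroccoli :: "nat \<Rightarrow> nat \<Rightarrow> ivec list \<Rightarrow> nat set \<Rightarrow> curve \<Rightarrow> bool" where
  "is_rbroccoli r s D F C \<longleftrightarrow> is_or_curve r s D C \<and>
     (\<forall>V\<in>verts r s (length D) C. typeI r s D F C V \<or> typeII r s D F C V \<or> typeIII r s D F C V)"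

definition mV_or :: "nat \<Rightarrow> nat \<Rightarrow> ivec list \<Rightarrow> nat set \<Rightarrow> real \<Rightarrow> curve \<Rightarrow> leaf set \<Rightarrow> real" where
  "mV_or r s D F y C V =
     (if typeI r s D F C V then 1
      else if typeII r s D F C V then qminus (real_of_int (mik D C V)) y
      else if typeIII r s D F C V then qplus (real_of_int (mik D C V)) y
      else 0)"

definition mC_or :: "nat \<Rightarrow> nat \<Rightarrow> ivec list \<Rightarrow> nat set \<Rightarrow> real \<Rightarrow> curve \<Rightarrow> real" where
  "mC_or r s D F y C = (\<Prod>i<length D. end_mult D F y i) *
     (\<Prod>V\<in>verts r s (length D) C. mV_or r s D F y C V)"

text \<open>Unoriented refined broccoli vertex types (I'), (II'), (III') and multiplicity.
  (Vertices of no listed type get factor 0; for conditions in general position this never occurs.)\<close>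
definition mV_un :: "nat \<Rightarrow> nat \<Rightarrow> ivec list \<Rightarrow> real \<Rightarrow> curve \<Rightarrow> leaf set \<Rightarrow> real" where
  "mV_un r s D y C V =
     (if card (edges_at C V) = 3 \<and> has_real_mark r C V then 1
      else if card (edges_at C V) = 3 \<and> \<not> has_mark C V then qminus (real_of_int (mik D C V)) y
      else if card (edges_at C V) = 4 \<and> has_cplx_mark r s C V then qplus (real_of_int (mik D C V)) y
      else 0)"

definition mC_un :: "nat \<Rightarrow> nat \<Rightarrow> ivec list \<Rightarrow> nat set \<Rightarrow> real \<Rightarrow> curve \<Rightarrow> real" where
  "mC_un r s D F y C = (\<Prod>i<length D. end_mult D F y i) *
     (\<Prod>V\<in>verts r s (length D) C. mV_un r s D y C V)"

definition is_desc :: "nat \<Rightarrow> nat \<Rightarrow> ivec list \<Rightarrow> curve \<Rightarrow> bool" where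
  "is_desc r s D C \<longleftrightarrow> is_curve r s D C \<and>
     (\<forall>i<r. \<forall>V\<in>verts r s (length D) C. {Mk i} \<in> children C V \<longrightarrow> card (edges_at C V) = 3) \<and>
     (\<forall>i. r \<le> i \<and> i < r + s \<longrightarrow>
        (\<forall>V\<in>verts r s (length D) C. {Mk i} \<in> children C V \<longrightarrow> card (edges_at C V) = 4))"

text \<open>Position h of the vertex to which leaf l is attached.\<close>
definition pos :: "ivec list \<Rightarrow> curve \<Rightarrow> leaf \<Rightarrow> pt" where
  "pos D C l = (fst (snd C) + (\<Sum>A\<in>{A\<in>edgesS C. l \<in> A}. \<bar>fst C A\<bar> * real_of_int (fst (sigma D A))),
                snd (snd C) + (\<Sum>A\<in>{A\<in>edgesS C. l \<in> A}. \<bar>fst C A\<bar> * real_of_int (snd (sigma D A))))"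

text \<open>Coordinates of the target of ev_F: PX i, PY i are the coordinates of h(x_{i+1});
  for i in F, FL i is the coordinate det(v(y_i), h(y_i)) of the class of h(y_i) in R^2/<v(y_i)>.\<close>
datatype evidx = PX nat | PY nat | FL nat

definition ev :: "nat \<Rightarrow> nat \<Rightarrow> ivec list \<Rightarrow> nat set \<Rightarrow> curve \<Rightarrow> evidx \<Rightarrow> real" where
  "ev r s D F C j = (case j of
      PX i \<Rightarrow> if i < r + s then fst (pos D C (Mk i)) else 0
    | PY i \<Rightarrow> if i < r + s then snd (pos D C (Mk i)) else 0
    | FL i \<Rightarrow> if i \<in> F then
                real_of_int (fst (D ! i)) * snd (pos D C (En i))
                - real_of_int (snd (D ! i)) * fst (pos D C (En i))
              else 0)"

definition lin_indep_fn :: "(evidx \<Rightarrow> real) set \<Rightarrow> bool" where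
  "lin_indep_fn B \<longleftrightarrow> (\<forall>c. (\<forall>j. (\<Sum>b\<in>B. c b * b j) = 0) \<longrightarrow> (\<forall>b\<in>B. c b = 0))"

definition aff_dim_fn :: "(evidx \<Rightarrow> real) set \<Rightarrow> nat" where
  "aff_dim_fn X = (GREATEST k. \<exists>B. finite B \<and> card B = k \<and> lin_indep_fn B \<and>
       B \<subseteq> {(\<lambda>j. p j - q j) | p q. p \<in> X \<and> q \<in> X})"

text \<open>Cells of a subcomplex M (a union of cells): curves of the same combinatorial type
  (support and orientation of the bounded edges).\<close>
definition cells :: "curve set \<Rightarrow> curve set set" where
  "cells M = {{C'\<in>M. sgn \<circ> fst C' = sgn \<circ> fst C} | C. C \<in> M}"

definition gen_pos :: "nat \<Rightarrow> nat \<Rightarrow> ivec list \<Rightarrow> nat set \<Rightarrow> curve set \<Rightarrow> (evidx \<Rightarrow> real) \<Rightarrow> bool" where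
  "gen_pos r s D F M P \<longleftrightarrow>
     (\<forall>X\<in>cells M. aff_dim_fn (ev r s D F ` X) < 2 * (r + s) + card F \<longrightarrow> P \<notin> ev r s D F ` X)"

definition M_desc_closure :: "nat \<Rightarrow> nat \<Rightarrow> ivec list \<Rightarrow> curve set" where
  "M_desc_closure r s D = closure {C. is_desc r s D C}"

definition M_rB :: "nat \<Rightarrow> nat \<Rightarrow> ivec list \<Rightarrow> nat set \<Rightarrow> curve set" where
  "M_rB r s D F = closure {C. is_rbroccoli r s D F C}"

definition Gsym :: "ivec list \<Rightarrow> nat set \<Rightarrow> nat" where
  "Gsym D F = card {p. p permutes {..<length D} \<and> (\<forall>i\<in>F. p i = i) \<and>
                       (\<forall>i<length D. D ! (p i) = D ! i)}"

definition N_rB :: "nat \<Rightarrow> nat \<Rightarrow> real \<Rightarrow> ivec list \<Rightarrow> nat set \<Rightarrow> (evidx \<Rightarrow> real) \<Rightarrow> real" where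
  "N_rB r s y D F P = (1 / real (Gsym D F)) *
     (\<Sum>C\<in>{C. is_rbroccoli r s D F C \<and> ev r s D F C = P}. mC_or r s D F y C)"

definition N_desc :: "nat \<Rightarrow> nat \<Rightarrow> real \<Rightarrow> ivec list \<Rightarrow> nat set \<Rightarrow> (evidx \<Rightarrow> real) \<Rightarrow> real" where
  "N_desc r s y D F P = (1 / real (Gsym D F)) *
     (\<Sum>C\<in>{C. is_desc r s D C \<and> ev r s D F C = P}. mC_un r s D F y C)"

end

(* Forgetting orientations maps oriented refined broccoli curves to refined descendant
   curves, preserving ev and, vertex by vertex, the multiplicity: types I, II, III become
   I', II', III'. The map is injective because at every vertex the orientation of the parent
   edge is forced by the orientations of the children.

   For surjectivity let C be a descendant curve through P. By general position the cell of C
   maps onto a set of full dimension 2(r+s)+|F|, while the cell has dimension |E|+2 for its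
   set E of bounded edges. Counting valences then shows that every vertex is trivalent or
   4-valent with a complex marking, that no bounded edge is contracted and that no vertex
   carries two markings. Orient an edge towards the reference end unless a non-fixed end below
   it can be reached without passing a marked vertex. A vertex violating the broccoli
   conditions would produce a charge on the markings and fixed ends whose linear functional
   is nonzero but vanishes on all tangent vectors of the cell; a telescoping count of the
   defects then shows that every vertex has broccoli type. *)

theory Submission
  imports Defs "HOL-Library.Function_Algebras"
begin

lemma card_leaves: "card (leaves r s n) = r + s + n"
proof -
  have "card (Mk ` {..<r+s} \<union> En ` {..<n}) = card (Mk ` {..<r+s}) + card (En ` {..<n})"
    by (rule card_Un_disjoint) auto
  also have "\<dots> = r + s + n" by (simp add: card_image inj_on_def)
  finally show ?thesis unfolding leaves_def .
qed

lemma finite_leaves: "finite (leaves r s n)"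
  unfolding leaves_def by simp

definition edge_dir :: "ivec list \<Rightarrow> leaf set \<Rightarrow> real \<times> real" where
  "edge_dir D A = (real_of_int (fst (sigma D A)), real_of_int (snd (sigma D A)))"

lemma edge_dir_eq_0_iff: "edge_dir D A = 0 \<longleftrightarrow> sigma D A = (0,0)"
  by (simp add: edge_dir_def zero_prod_def prod_eq_iff)

lemma sigma_union:
  "finite A \<Longrightarrow> finite B \<Longrightarrow> A \<inter> B = {} \<Longrightarrow>
    sigma D (A \<union> B) = (fst (sigma D A) + fst (sigma D B), snd (sigma D A) + snd (sigma D B))"
  by (simp add: sigma_def sum.union_disjoint)

lemma sigma_En: "sigma D {En i} = D ! i"
  by (simp add: sigma_def vdir_def)

lemma sigma_Mk: "sigma D {Mk m} = (0,0)"
  by (simp add: sigma_def vdir_def)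

lemma edge_dir_UN_disjoint:
  assumes "finite K" "\<And>c. c \<in> K \<Longrightarrow> finite c" "\<And>c c'. c \<in> K \<Longrightarrow> c' \<in> K \<Longrightarrow> c \<noteq> c' \<Longrightarrow> c \<inter> c' = {}"
  shows "edge_dir D (\<Union>K) = (\<Sum>c\<in>K. edge_dir D c)"
proof -
  have "(\<Sum>l\<in>\<Union>K. f l) = (\<Sum>c\<in>K. \<Sum>l\<in>c. f l)" for f :: "leaf \<Rightarrow> int"
  proof -
    have "\<forall>c\<in>K. finite c" "\<forall>c\<in>K. \<forall>c'\<in>K. c \<noteq> c' \<longrightarrow> c \<inter> c' = {}"
      using assms(2,3) by blast+
    from sum.Union_disjoint[OF this, of f] show ?thesis by (simp only: comp_def)
  qed
  then show ?thesis by (simp add: edge_dir_def sigma_def sum_prod)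
qed

definition is_marking :: "leaf set \<Rightarrow> bool" where
  "is_marking c \<longleftrightarrow> (\<exists>m. c = {Mk m})"

definition is_cplx_marking :: "nat \<Rightarrow> nat \<Rightarrow> leaf set \<Rightarrow> bool" where
  "is_cplx_marking r s c \<longleftrightarrow> (\<exists>m. r \<le> m \<and> m < r + s \<and> c = {Mk m})"

section \<open>The tree of a curve\<close>

locale curve_tree =
  fixes r s :: nat and D :: "ivec list" and F :: "nat set" and C :: curve
  assumes curve_data: "is_curve_data r s D C" and ends_nonempty: "D \<noteq> []"
    and fixed_ends: "F \<subseteq> {..<length D}"
begin

abbreviation "n \<equiv> length D"
abbreviation "Es \<equiv> edgesS C"
abbreviation "R \<equiv> root r s n"
abbreviation "Lv \<equiv> leaves r s n"
abbreviation "Vs \<equiv> verts r s n C"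
abbreviation "ch \<equiv> children C"

lemma En0_in_leaves: "En 0 \<in> Lv"
  using ends_nonempty by (auto simp: leaves_def)

lemma root_eq: "R = Lv - {En 0}"
  by (simp add: root_def refl_leaf_def)

lemma En0_notin_root: "En 0 \<notin> R"
  by (simp add: root_eq)

lemma root_subset_leaves: "R \<subseteq> Lv"
  by (auto simp: root_eq)

lemma finite_root: "finite R"
  by (simp add: root_eq finite_leaves)

lemma card_root: "card R + 1 = card Lv"
proof -
  have "card R = card Lv - 1"
    unfolding root_eq by (rule card_Diff_singleton[OF En0_in_leaves])
  moreover have "3 \<le> card Lv" using curve_data by (simp add: is_curve_data_def)
  ultimately show ?thesis by linarith
qed

lemma two_le_card_root: "2 \<le> card R"
  using card_root curve_data by (simp add: is_curve_data_def)

lemma edge_split: "A \<in> Es \<Longrightarrow> is_split r s n A"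
  using curve_data by (simp add: is_curve_data_def)

lemma edge_subset_root: "A \<in> Es \<Longrightarrow> A \<subseteq> R"
  using edge_split by (simp add: is_split_def)

lemma two_le_card_edge: "A \<in> Es \<Longrightarrow> 2 \<le> card A"
  using edge_split by (simp add: is_split_def)

lemma finite_edge: "A \<in> Es \<Longrightarrow> finite A"
  using edge_subset_root finite_root finite_subset by blast

lemma edge_neq_root: "A \<in> Es \<Longrightarrow> A \<noteq> R"
  using edge_split card_root by (force simp: is_split_def)

lemma edge_psubset_root: "A \<in> Es \<Longrightarrow> A \<subset> R"
  using edge_subset_root edge_neq_root by blast

lemma edge_not_subset_singleton: "A \<in> Es \<Longrightarrow> \<not> A \<subseteq> {l}"
  using two_le_card_edge card_mono[of "{l}" A] by fastforce

lemma edge_neq_singleton: "A \<in> Es \<Longrightarrow> A \<noteq> {l}"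
  using edge_not_subset_singleton by blast

lemma finite_edges: "finite Es"
  using edge_subset_root finite_root by (meson PowI finite_Pow_iff finite_subset subsetI)

lemma edges_laminar: "A \<in> Es \<Longrightarrow> B \<in> Es \<Longrightarrow> A \<inter> B = {} \<or> A \<subseteq> B \<or> B \<subseteq> A"
  using curve_data by (simp add: is_curve_data_def)

lemma verts_eq: "Vs = insert R Es"
  by (simp add: verts_def)

lemma root_in_verts: "R \<in> Vs"
  by (simp add: verts_eq)

lemma vert_subset_root: "V \<in> Vs \<Longrightarrow> V \<subseteq> R"
  using edge_subset_root by (auto simp: verts_eq)

lemma finite_vert: "V \<in> Vs \<Longrightarrow> finite V"
  using vert_subset_root finite_root finite_subset by blast

lemma two_le_card_vert: "V \<in> Vs \<Longrightarrow> 2 \<le> card V"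
  using two_le_card_edge two_le_card_root by (auto simp: verts_eq)

lemma finite_verts: "finite Vs"
  using finite_edges by (simp add: verts_eq)

lemma root_notin_edges: "R \<notin> Es"
  using edge_neq_root by blast

lemma card_verts: "card Vs = card Es + 1"
  using finite_edges root_notin_edges by (simp add: verts_eq)

text \<open>Every edge other than the reference end, identified with its lower side: the bounded
  edges and the ends attached to leaves of the root side.\<close>
definition subtrees :: "leaf set set" where
  "subtrees = Es \<union> (\<lambda>l. {l}) ` R"

lemma subtree_subset_root: "I \<in> subtrees \<Longrightarrow> I \<subseteq> R"
  unfolding subtrees_def using edge_subset_root by auto

lemma subtree_nonempty: "I \<in> subtrees \<Longrightarrow> I \<noteq> {}"
  unfolding subtrees_def using two_le_card_edge by fastforce

lemma subtree_neq_root: "I \<in> subtrees \<Longrightarrow> I \<noteq> R"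
  unfolding subtrees_def using edge_neq_root two_le_card_root by fastforce

lemma finite_subtree: "I \<in> subtrees \<Longrightarrow> finite I"
  using subtree_subset_root finite_root finite_subset by blast

lemma finite_subtrees: "finite subtrees"
  unfolding subtrees_def using finite_edges finite_root by simp

lemma laminar:
  assumes "I \<in> insert R subtrees" "J \<in> insert R subtrees"
  shows "I \<inter> J = {} \<or> I \<subseteq> J \<or> J \<subseteq> I"
  using assms edges_laminar subtree_subset_root by (auto simp: subtrees_def)

lemma verts_subset_subtrees: "Vs \<subseteq> insert R subtrees"
  by (auto simp: verts_eq subtrees_def)

lemma children_iff:
  "c \<in> ch V \<longleftrightarrow> (c \<in> Es \<or> (\<exists>l\<in>V. c = {l})) \<and> c \<subset> V \<and> \<not> (\<exists>E\<in>Es. c \<subset> E \<and> E \<subset> V)"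
  unfolding children_def by blast

lemma child_psubset: "c \<in> ch V \<Longrightarrow> c \<subset> V"
  by (simp add: children_iff)

lemma child_in_subtrees:
  assumes "V \<in> Vs" "c \<in> ch V"
  shows "c \<in> subtrees"
proof -
  have "c \<in> Es \<or> (\<exists>l\<in>V. c = {l})" using assms(2) by (simp add: children_iff)
  then show ?thesis using vert_subset_root[OF assms(1)] by (auto simp: subtrees_def)
qed

lemma finite_children: "V \<in> Vs \<Longrightarrow> finite (ch V)"
  using child_in_subtrees finite_subtrees by (meson finite_subset subsetI)

lemma children_disjoint:
  assumes "V \<in> Vs" "c1 \<in> ch V" "c2 \<in> ch V" "c1 \<noteq> c2"
  shows "c1 \<inter> c2 = {}"
proof -
  have sub: "c1 \<in> subtrees" "c2 \<in> subtrees" using assms child_in_subtrees by auto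
  have "\<not> c1 \<subset> c2"
  proof
    assume "c1 \<subset> c2"
    then have "c2 \<in> Es" using sub subtree_nonempty by (auto simp: subtrees_def)
    with \<open>c1 \<subset> c2\<close> assms(2,3) show False by (auto simp: children_iff)
  qed
  moreover have "\<not> c2 \<subset> c1"
  proof
    assume "c2 \<subset> c1"
    then have "c1 \<in> Es" using sub subtree_nonempty by (auto simp: subtrees_def)
    with \<open>c2 \<subset> c1\<close> assms(2,3) show False by (auto simp: children_iff)
  qed
  ultimately show ?thesis using laminar sub assms(4) by blast
qed

lemma subtree_below_child:
  assumes "V \<in> Vs" "I \<in> subtrees" "I \<subset> V"
  shows "\<exists>c\<in>ch V. I \<subseteq> c"
proof -
  let ?S = "{A \<in> insert I Es. I \<subseteq> A \<and> A \<subset> V}"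
  have fin: "finite ?S" using finite_edges by simp
  have "I \<in> ?S" using assms by auto
  from finite_has_maximal2[OF fin this] obtain M
    where M: "M \<in> ?S" "\<forall>A\<in>?S. M \<le> A \<longrightarrow> M = A" by blast
  have "M \<in> Es \<or> (\<exists>l\<in>V. M = {l})"
    using M(1) assms(2,3) unfolding subtrees_def by auto
  moreover have "\<not> (\<exists>E\<in>Es. M \<subset> E \<and> E \<subset> V)"
  proof
    assume "\<exists>E\<in>Es. M \<subset> E \<and> E \<subset> V"
    then obtain E where "E \<in> Es" "M \<subset> E" "E \<subset> V" by blast
    then have "E \<in> ?S" using M(1) by auto
    with M(2) \<open>M \<subset> E\<close> show False by blast
  qed
  ultimately have "M \<in> ch V" using M(1) by (auto simp: children_iff)
  then show ?thesis using M(1) by blast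
qed

lemma Union_children:
  assumes V: "V \<in> Vs"
  shows "\<Union>(ch V) = V"
proof
  show "\<Union>(ch V) \<subseteq> V" using child_psubset by blast
  show "V \<subseteq> \<Union>(ch V)"
  proof
    fix l assume "l \<in> V"
    moreover have "V \<noteq> {l}" using two_le_card_vert[OF V] by auto
    ultimately have "{l} \<in> subtrees" "{l} \<subset> V"
      using vert_subset_root[OF V] unfolding subtrees_def by auto
    then show "l \<in> \<Union>(ch V)" using subtree_below_child[OF V] by blast
  qed
qed

lemma two_le_card_children:
  assumes V: "V \<in> Vs"
  shows "2 \<le> card (ch V)"
proof (rule ccontr)
  assume "\<not> 2 \<le> card (ch V)"
  then have "card (ch V) = 0 \<or> card (ch V) = 1" by arith
  moreover have "card (ch V) \<noteq> 0"
    using Union_children[OF V] finite_children[OF V] two_le_card_vert[OF V] by auto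
  moreover have False if one: "card (ch V) = 1"
  proof -
    obtain c where "ch V = {c}" using card_1_singletonE[OF one] by blast
    with Union_children[OF V] child_psubset[of c V] show False by auto
  qed
  ultimately show False by blast
qed

lemma unique_parent:
  assumes I: "I \<in> subtrees"
  shows "\<exists>!V. V \<in> Vs \<and> I \<in> ch V"
proof -
  let ?S = "{A \<in> Vs. I \<subset> A}"
  have fin: "finite ?S" using finite_verts by simp
  have "R \<in> ?S" using root_in_verts subtree_subset_root[OF I] subtree_neq_root[OF I] by blast
  from finite_has_minimal2[OF fin this] obtain M
    where M: "M \<in> ?S" "\<forall>A\<in>?S. A \<le> M \<longrightarrow> M = A" by blast
  have M_vert: "M \<in> Vs" and IM: "I \<subset> M" using M(1) by auto
  have I_child: "I \<in> ch M"
  proof -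
    have "I \<in> Es \<or> (\<exists>l\<in>M. I = {l})" using I IM unfolding subtrees_def by blast
    moreover have "\<not> (\<exists>E\<in>Es. I \<subset> E \<and> E \<subset> M)"
    proof
      assume "\<exists>E\<in>Es. I \<subset> E \<and> E \<subset> M"
      then obtain E where "E \<in> Es" "I \<subset> E" "E \<subset> M" by blast
      then show False using M(2) by (auto simp: verts_eq)
    qed
    ultimately show ?thesis using IM unfolding children_iff by blast
  qed
  have "V = M" if V: "V \<in> Vs" "I \<in> ch V" for V
  proof -
    have IV: "I \<subset> V" using V(2) by (rule child_psubset)
    have "V \<inter> M \<noteq> {}" using IV IM subtree_nonempty[OF I] by blast
    moreover have "V \<in> insert R subtrees" "M \<in> insert R subtrees"
      using verts_subset_subtrees V(1) M_vert by blast+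
    ultimately have "V \<subseteq> M \<or> M \<subseteq> V" using laminar by blast
    moreover have False if "V \<subset> M"
    proof -
      have "V \<in> Es" using that V(1) vert_subset_root[OF M_vert] by (auto simp: verts_eq)
      with that IV I_child show False unfolding children_iff by blast
    qed
    moreover have False if "M \<subset> V"
    proof -
      have "M \<in> Es" using that M_vert vert_subset_root[OF V(1)] by (auto simp: verts_eq)
      with that IM V(2) show False unfolding children_iff by blast
    qed
    ultimately show ?thesis by blast
  qed
  then show ?thesis using M_vert I_child by blast
qed

lemma edge_vs_child:
  assumes "V \<in> Vs" "c \<in> ch V" "A \<in> Es"
  shows "A \<subseteq> c \<or> V \<subseteq> A \<or> A \<inter> c = {}"
proof -
  have c: "c \<in> subtrees" using assms child_in_subtrees by blast
  have A: "A \<in> subtrees" using assms by (simp add: subtrees_def)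
  have "V \<subseteq> A" if "c \<subset> A"
  proof -
    have "A \<inter> V \<noteq> {}" using that child_psubset[OF assms(2)] subtree_nonempty[OF c] by blast
    then have "A \<subseteq> V \<or> V \<subseteq> A"
      using laminar[of A V] A verts_subset_subtrees assms(1) by blast
    moreover have "\<not> A \<subset> V" using that assms by (auto simp: children_iff)
    ultimately show ?thesis by blast
  qed
  then show ?thesis using laminar[of A c] A c by blast
qed

lemma mark_child_edge_iff:
  assumes "V \<in> Vs" "{Mk m} \<in> ch V" "A \<in> Es"
  shows "Mk m \<in> A \<longleftrightarrow> V \<subseteq> A"
proof
  assume "Mk m \<in> A"
  moreover have "\<not> A \<subseteq> {Mk m}" using edge_not_subset_singleton[OF assms(3)] .
  ultimately show "V \<subseteq> A" using edge_vs_child[OF assms] by blast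
qed (use child_psubset[OF assms(2)] in blast)

lemma edge_vs_marked_sibling:
  assumes V: "V \<in> Vs" and m: "{Mk m} \<in> ch V" and c: "c \<in> ch V" "Mk m \<notin> c" and A: "A \<in> Es"
  shows "(A \<subseteq> c \<and> Mk m \<notin> A) \<or> (c \<subseteq> A \<and> Mk m \<in> A) \<or> (A \<inter> c = {} \<and> Mk m \<notin> A)"
proof -
  have "c \<noteq> {}" using subtree_nonempty[OF child_in_subtrees[OF V c(1)]] .
  moreover have "Mk m \<in> A \<longleftrightarrow> V \<subseteq> A" by (rule mark_child_edge_iff[OF V m A])
  ultimately show ?thesis
    using edge_vs_child[OF V c(1) A] child_psubset[OF c(1)] c(2) by blast
qed

lemma children_disjoint_verts: "V \<in> Vs \<Longrightarrow> W \<in> Vs \<Longrightarrow> V \<noteq> W \<Longrightarrow> ch V \<inter> ch W = {}"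
  using unique_parent child_in_subtrees by blast

lemma UN_children: "(\<Union>V\<in>Vs. ch V) = subtrees"
  using unique_parent child_in_subtrees by blast

lemma sum_children:
  fixes \<phi> :: "leaf set \<Rightarrow> 'a::comm_monoid_add"
  shows "(\<Sum>V\<in>Vs. \<Sum>c\<in>ch V. \<phi> c) = (\<Sum>A\<in>Es. \<phi> A) + (\<Sum>l\<in>R. \<phi> {l})"
proof -
  have "(\<Sum>V\<in>Vs. \<Sum>c\<in>ch V. \<phi> c) = sum \<phi> (\<Union>V\<in>Vs. ch V)"
    by (rule sum.UNION_disjoint[symmetric])
      (auto simp: finite_verts finite_children dest: children_disjoint_verts)
  also have "\<dots> = sum \<phi> Es + sum \<phi> ((\<lambda>l. {l}) ` R)"
    unfolding UN_children subtrees_def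
    by (rule sum.union_disjoint) (auto simp: finite_edges finite_root dest: edge_neq_singleton)
  also have "sum \<phi> ((\<lambda>l. {l}) ` R) = (\<Sum>l\<in>R. \<phi> {l})"
    by (simp add: sum.reindex)
  finally show ?thesis .
qed

lemma edge_dir_children:
  assumes V: "V \<in> Vs"
  shows "edge_dir D V = (\<Sum>c\<in>ch V. edge_dir D c)"
proof -
  have "edge_dir D (\<Union>(ch V)) = (\<Sum>c\<in>ch V. edge_dir D c)"
  proof (rule edge_dir_UN_disjoint)
    show "finite (ch V)" using finite_children[OF V] .
    show "finite c" if "c \<in> ch V" for c
      using finite_subtree child_in_subtrees[OF V that] .
    show "c \<inter> c' = {}" if "c \<in> ch V" "c' \<in> ch V" "c \<noteq> c'" for c c'
      using children_disjoint[OF V that] .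
  qed
  then show ?thesis using Union_children[OF V] by simp
qed

lemma end_dir_nonzero: "i < n \<Longrightarrow> D ! i \<noteq> (0,0)"
  using curve_data by (auto simp: is_curve_data_def)

lemma sigma_root: "sigma D R = (- fst (D ! 0), - snd (D ! 0))"
proof -
  have "Lv = R \<union> {En 0}" using En0_in_leaves by (auto simp: root_eq)
  then have "sigma D Lv = (fst (sigma D R) + fst (D ! 0), snd (sigma D R) + snd (D ! 0))"
    using sigma_union[of R "{En 0}"] finite_root En0_notin_root sigma_En by simp
  moreover have "sigma D Lv = (0,0)" using curve_data by (simp add: is_curve_data_def)
  ultimately show ?thesis by (simp add: prod_eq_iff)
qed

lemma sigma_root_nonzero: "sigma D R \<noteq> (0,0)"
  using end_dir_nonzero[of 0] ends_nonempty sigma_root by (cases "D ! 0") auto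

lemma marking_child_bound: "V \<in> Vs \<Longrightarrow> {Mk a} \<in> ch V \<Longrightarrow> a < r + s"
  using child_psubset vert_subset_root by (fastforce simp: root_eq leaves_def)

definition num_markings :: "leaf set \<Rightarrow> nat" where
  "num_markings V = card {c \<in> ch V. is_marking c}"

definition num_cplx_markings :: "leaf set \<Rightarrow> nat" where
  "num_cplx_markings V = card {c \<in> ch V. is_cplx_marking r s c}"

lemma has_mark_iff: "has_mark C V \<longleftrightarrow> (\<exists>c\<in>ch V. is_marking c)"
  by (auto simp: has_mark_def is_marking_def)

lemma has_cplx_mark_iff: "has_cplx_mark r s C V \<longleftrightarrow> (\<exists>c\<in>ch V. is_cplx_marking r s c)"
  by (auto simp: has_cplx_mark_def is_cplx_marking_def)

lemma edge_not_marking: "A \<in> Es \<Longrightarrow> \<not> is_marking A"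
  using edge_neq_singleton by (auto simp: is_marking_def)

lemma root_neq_singleton: "R \<noteq> {l}"
  using two_le_card_root by (metis card.empty card.insert empty_iff finite.emptyI
      numeral_le_one_iff semiring_norm(69) One_nat_def)

lemma root_not_marking: "\<not> is_marking R"
proof
  assume "is_marking R"
  then obtain m where "R = {Mk m}" by (auto simp: is_marking_def)
  then show False using two_le_card_root by simp
qed

lemma sum_card_children: "(\<Sum>V\<in>Vs. int (card (ch V))) = int (card Es) + int (card R)"
  using sum_children[of "\<lambda>_. 1 :: int"] by simp

lemma sum_count_children:
  assumes "\<And>A. A \<in> Es \<Longrightarrow> \<not> P A"
  shows "(\<Sum>V\<in>Vs. int (card {c \<in> ch V. P c})) = int (card {l \<in> R. P {l}})"
proof -
  have "(\<Sum>V\<in>Vs. int (card {c \<in> ch V. P c})) = (\<Sum>V\<in>Vs. \<Sum>c\<in>ch V. of_bool (P c))"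
    by (intro sum.cong) (auto simp: finite_children Int_def)
  also have "\<dots> = (\<Sum>A\<in>Es. of_bool (P A)) + (\<Sum>l\<in>R. of_bool (P {l}))"
    by (rule sum_children)
  also have "\<dots> = int (card {l \<in> R. P {l}})"
    using assms finite_root by (simp add: Int_def)
  finally show ?thesis .
qed

lemma sum_num_markings: "(\<Sum>V\<in>Vs. int (num_markings V)) = int (r + s)"
proof -
  have "{l \<in> R. is_marking {l}} = Mk ` {..<r+s}"
    by (auto simp: root_eq leaves_def is_marking_def)
  then show ?thesis
    using sum_count_children[of is_marking] edge_not_marking
    by (simp add: num_markings_def card_image inj_on_def)
qed

lemma sum_num_cplx_markings: "(\<Sum>V\<in>Vs. int (num_cplx_markings V)) = int s"
proof -
  have "{l \<in> R. is_cplx_marking r s {l}} = Mk ` {r..<r+s}"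
    by (auto simp: root_eq leaves_def is_cplx_marking_def)
  moreover have "\<not> is_cplx_marking r s A" if "A \<in> Es" for A
    using edge_neq_singleton[OF that] by (auto simp: is_cplx_marking_def)
  ultimately show ?thesis
    using sum_count_children[of "is_cplx_marking r s"]
    by (simp add: num_cplx_markings_def card_image inj_on_def)
qed

lemma num_cplx_markings_le: "V \<in> Vs \<Longrightarrow> num_cplx_markings V \<le> num_markings V"
  unfolding num_cplx_markings_def num_markings_def
  by (rule card_mono) (auto simp: finite_children is_cplx_marking_def is_marking_def)

definition reaches_free_end :: "leaf set \<Rightarrow> bool" where
  "reaches_free_end I \<longleftrightarrow>
     (\<exists>i. i \<notin> F \<and> En i \<in> I \<and> (\<forall>A\<in>Es. En i \<in> A \<and> A \<subseteq> I \<longrightarrow> \<not> has_mark C A))"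

definition points_up :: "leaf set \<Rightarrow> bool" where
  "points_up I \<longleftrightarrow> \<not> is_marking I \<and> (if I = R then 0 \<notin> F else \<not> reaches_free_end I)"

text \<open>The number of outgoing edges at V minus card (ch V) + num_markings V - 1, which is the
  number at a broccoli vertex (one if V is unmarked, all non-contracted edges if marked).\<close>
definition orientation_defect :: "leaf set \<Rightarrow> int" where
  "orientation_defect V =
     of_bool (points_up V) - (\<Sum>c\<in>ch V. of_bool (points_up c)) + 1 - 2 * int (num_markings V)"

lemma finite_fixed_ends: "finite F"
  using fixed_ends finite_subset by blast

lemma reaches_free_end_En: "reaches_free_end {En i} \<longleftrightarrow> i \<notin> F"
  using edge_not_subset_singleton by (auto simp: reaches_free_end_def)

lemma not_reaches_free_end_Mk: "\<not> reaches_free_end {Mk m}"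
  by (auto simp: reaches_free_end_def)

lemma reaches_free_end_edge:
  assumes V: "V \<in> Es"
  shows "reaches_free_end V \<longleftrightarrow> \<not> has_mark C V \<and> (\<exists>c\<in>ch V. reaches_free_end c)"
proof
  have V_vert: "V \<in> Vs" using V by (simp add: verts_eq)
  assume "reaches_free_end V"
  then obtain i where i: "i \<notin> F" "En i \<in> V" "\<forall>A\<in>Es. En i \<in> A \<and> A \<subseteq> V \<longrightarrow> \<not> has_mark C A"
    unfolding reaches_free_end_def by blast
  have "\<not> has_mark C V" using i(2,3) V by blast
  moreover obtain c where c: "c \<in> ch V" "En i \<in> c" using Union_children[OF V_vert] i(2) by blast
  have "c \<subseteq> V" using child_psubset[OF c(1)] by blast
  then have "\<forall>A\<in>Es. En i \<in> A \<and> A \<subseteq> c \<longrightarrow> \<not> has_mark C A" using i(3) by blast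
  then have "reaches_free_end c" unfolding reaches_free_end_def using i(1) c(2) by blast
  ultimately show "\<not> has_mark C V \<and> (\<exists>c\<in>ch V. reaches_free_end c)" using c(1) by blast
next
  have V_vert: "V \<in> Vs" using V by (simp add: verts_eq)
  assume "\<not> has_mark C V \<and> (\<exists>c\<in>ch V. reaches_free_end c)"
  then obtain c where no_mark: "\<not> has_mark C V" and c: "c \<in> ch V" "reaches_free_end c" by blast
  from c(2) obtain i where i: "i \<notin> F" "En i \<in> c"
    and below_c: "\<forall>A\<in>Es. En i \<in> A \<and> A \<subseteq> c \<longrightarrow> \<not> has_mark C A"
    unfolding reaches_free_end_def by blast
  have "\<not> has_mark C A" if A: "A \<in> Es" "En i \<in> A \<and> A \<subseteq> V" for A
  proof (cases "A = V")
    case True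
    then show ?thesis using no_mark by simp
  next
    case False
    then have "A \<subset> V" using A by blast
    moreover have "A \<in> subtrees" using A(1) by (simp add: subtrees_def)
    ultimately obtain c' where c': "c' \<in> ch V" "A \<subseteq> c'" using subtree_below_child[OF V_vert] by blast
    have "En i \<in> c' \<inter> c" using c'(2) A(2) i(2) by blast
    then have "c' = c" using children_disjoint[OF V_vert c'(1) c(1)] by blast
    then have "A \<subseteq> c" using c'(2) by simp
    then show ?thesis using below_c A by blast
  qed
  moreover have "En i \<in> V" using child_psubset[OF c(1)] i(2) by blast
  ultimately show "reaches_free_end V" unfolding reaches_free_end_def using i(1) by blast
qed

lemma sum_points_up_leaves: "(\<Sum>l\<in>R. of_bool (points_up {l})) = int (card (F - {0}))"
proof -
  have "points_up {l} \<longleftrightarrow> l \<in> En ` (F - {0})" if l: "l \<in> R" for l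
  proof -
    have "{l} \<noteq> R" using root_neq_singleton by metis
    moreover have "points_up {l} \<longleftrightarrow> \<not> is_marking {l} \<and> \<not> reaches_free_end {l}"
      using calculation by (simp add: points_up_def)
    moreover have "l \<noteq> En 0" using l En0_notin_root by blast
    ultimately show ?thesis
      by (cases l) (auto simp: is_marking_def reaches_free_end_En not_reaches_free_end_Mk)
  qed
  then have "(\<Sum>l\<in>R. of_bool (points_up {l}) :: int) = (\<Sum>l\<in>R. of_bool (l \<in> En ` (F - {0})))"
    by (intro sum.cong) auto
  also have "\<dots> = int (card (R \<inter> En ` (F - {0})))"
    using finite_root by (simp add: Int_def)
  also have "R \<inter> En ` (F - {0}) = En ` (F - {0})"
    using fixed_ends by (auto simp: root_eq leaves_def)
  also have "card (En ` (F - {0})) = card (F - {0})"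
    by (simp add: card_image inj_on_def)
  finally show ?thesis .
qed

lemma sum_orientation_defect:
  "(\<Sum>V\<in>Vs. orientation_defect V) = int (card Es) + 2 - (2 * int (r + s) + int (card F))"
proof -
  let ?u = "\<lambda>I. of_bool (points_up I) :: int"
  have "(\<Sum>V\<in>Vs. orientation_defect V) =
      (\<Sum>V\<in>Vs. ?u V) - (\<Sum>V\<in>Vs. \<Sum>c\<in>ch V. ?u c) + int (card Vs) - 2 * (\<Sum>V\<in>Vs. int (num_markings V))"
    by (simp add: orientation_defect_def sum_subtractf sum.distrib sum_distrib_left)
  also have "(\<Sum>V\<in>Vs. ?u V) = ?u R + (\<Sum>A\<in>Es. ?u A)"
    using finite_edges root_notin_edges by (simp add: verts_eq del: sum_of_bool_eq)
  also have "(\<Sum>V\<in>Vs. \<Sum>c\<in>ch V. ?u c) = (\<Sum>A\<in>Es. ?u A) + int (card (F - {0}))"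
    by (simp add: sum_children sum_points_up_leaves)
  finally have "(\<Sum>V\<in>Vs. orientation_defect V) =
      ?u R - int (card (F - {0})) + int (card Es + 1) - 2 * int (r + s)"
    by (simp add: sum_num_markings card_verts)
  moreover have "?u R - int (card (F - {0})) = 1 - int (card F)"
  proof (cases "0 \<in> F")
    case True
    then have "\<not> points_up R" by (simp add: points_up_def)
    moreover have "0 < card F" using True finite_fixed_ends card_gt_0_iff by blast
    moreover have "card (F - {0}) = card F - 1" using True by (rule card_Diff_singleton)
    ultimately show ?thesis by (simp add: of_nat_diff)
  next
    case False
    then have "points_up R" using root_not_marking by (simp add: points_up_def)
    moreover have "F - {0} = F" using False by blast
    ultimately show ?thesis by simp
  qed
  ultimately show ?thesis by linarith
qed

end

section \<open>Linear algebra on the target of the evaluation map\<close>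

interpretation ev_space: vector_space "\<lambda>(c::real) (f::evidx \<Rightarrow> real) j. c * f j"
  by unfold_locales (auto simp: fun_eq_iff algebra_simps)

lemma sum_fun_apply: "(sum f A) x = (\<Sum>a\<in>A. f a x)"
  by (induction A rule: infinite_finite_induct) auto

lemma lin_indep_fn_independent:
  assumes "finite B" "lin_indep_fn B"
  shows "ev_space.independent B"
proof
  assume "ev_space.dependent B"
  then obtain u where u: "\<exists>v\<in>B. u v \<noteq> 0" "(\<Sum>v\<in>B. (\<lambda>j. u v * v j)) = 0"
    using ev_space.dependent_finite[OF assms(1)] by blast
  have "\<forall>j. (\<Sum>b\<in>B. u b * b j) = 0"
    using u(2) by (simp add: fun_eq_iff sum_fun_apply)
  then show False using assms(2) u(1) unfolding lin_indep_fn_def by blast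
qed

lemma aff_dim_fn_less:
  assumes diff: "\<forall>p\<in>Y. \<forall>q\<in>Y. (\<lambda>j. p j - q j) \<in> ev_space.span S" and "finite S" "card S < k"
  shows "aff_dim_fn Y < k"
proof -
  let ?P = "\<lambda>k. \<exists>B. finite B \<and> card B = k \<and> lin_indep_fn B \<and>
    B \<subseteq> {(\<lambda>j. p j - q j) | p q. p \<in> Y \<and> q \<in> Y}"
  have bound: "\<forall>k. ?P k \<longrightarrow> k \<le> card S"
  proof (intro allI impI)
    fix k assume "?P k"
    then obtain B where B: "finite B" "card B = k" "lin_indep_fn B"
      "B \<subseteq> {(\<lambda>j. p j - q j) | p q. p \<in> Y \<and> q \<in> Y}" by blast
    have "B \<subseteq> ev_space.span S" using B(4) diff by blast
    from ev_space.independent_span_bound[OF \<open>finite S\<close> lin_indep_fn_independent[OF B(1,3)] this]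
    show "k \<le> card S" using B(2) by simp
  qed
  have "?P 0" by (rule exI[of _ "{}"]) (simp add: lin_indep_fn_def)
  then have "?P (Greatest ?P)" using GreatestI_nat[of ?P 0 "card S"] bound by blast
  then have "Greatest ?P \<le> card S" using bound by blast
  then show ?thesis using assms(3) unfolding aff_dim_fn_def by simp
qed

definition coord_vec :: "evidx \<Rightarrow> evidx \<Rightarrow> real" where
  "coord_vec j = (\<lambda>k. if k = j then 1 else 0)"

lemma annihilated_expansion:
  fixes lam v :: "evidx \<Rightarrow> real"
  assumes fin: "finite J" and j0: "j0 \<in> J" "lam j0 \<noteq> 0"
    and v: "\<forall>j. j \<notin> J \<longrightarrow> v j = 0" "(\<Sum>j\<in>J. lam j * v j) = 0"
  shows "v = (\<Sum>j\<in>J - {j0}. (\<lambda>k. v j * (coord_vec j k - lam j / lam j0 * coord_vec j0 k)))"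
proof
  fix k
  have sum_eq: "(\<Sum>j\<in>J - {j0}. (\<lambda>k. v j * (coord_vec j k - lam j / lam j0 * coord_vec j0 k))) k =
      (\<Sum>j\<in>J - {j0}. v j * coord_vec j k) - (\<Sum>j\<in>J - {j0}. v j * lam j) / lam j0 * coord_vec j0 k"
    by (simp add: sum_fun_apply algebra_simps sum_subtractf sum_divide_distrib
        sum_distrib_left sum_distrib_right)
  have lam_v: "(\<Sum>j\<in>J - {j0}. v j * lam j) = - (lam j0 * v j0)"
  proof -
    have "(\<Sum>j\<in>J. lam j * v j) = lam j0 * v j0 + (\<Sum>j\<in>J - {j0}. lam j * v j)"
      using fin j0(1) by (simp add: sum.remove)
    then show ?thesis using v(2) by (simp add: mult.commute)
  qed
  show "v k = (\<Sum>j\<in>J - {j0}. (\<lambda>k. v j * (coord_vec j k - lam j / lam j0 * coord_vec j0 k))) k"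
  proof (cases "k \<in> J - {j0}")
    case True
    have "(\<Sum>j\<in>J - {j0}. v j * coord_vec j k) = v k"
      using True fin by (simp add: coord_vec_def sum.delta' if_distrib cong: if_cong)
    moreover have "coord_vec j0 k = 0" using True by (auto simp: coord_vec_def)
    ultimately show ?thesis using sum_eq by simp
  next
    case False
    have zero: "(\<Sum>j\<in>J - {j0}. v j * coord_vec j k) = 0"
      by (rule sum.neutral) (use False in \<open>auto simp: coord_vec_def\<close>)
    show ?thesis
    proof (cases "k = j0")
      case True
      then show ?thesis using sum_eq zero lam_v j0(2) by (simp add: coord_vec_def)
    next
      case k_ne: False
      then have "k \<notin> J" using False by blast
      then show ?thesis using sum_eq zero v(1) k_ne by (simp add: coord_vec_def)
    qed
  qed
qed

lemma annihilated_in_small_span: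
  fixes lam :: "evidx \<Rightarrow> real"
  assumes fin: "finite J" and j0: "j0 \<in> J" "lam j0 \<noteq> 0"
  shows "\<exists>S. finite S \<and> card S < card J \<and>
    {v. (\<forall>j. j \<notin> J \<longrightarrow> v j = 0) \<and> (\<Sum>j\<in>J. lam j * v j) = 0} \<subseteq> ev_space.span S"
proof -
  define b where "b j = (\<lambda>k. coord_vec j k - lam j / lam j0 * coord_vec j0 k)" for j
  let ?S = "b ` (J - {j0})"
  have "card ?S \<le> card (J - {j0})" by (rule card_image_le) (simp add: fin)
  also have "\<dots> < card J" by (rule card_Diff1_less[OF fin j0(1)])
  finally have "card ?S < card J" .
  moreover have "v \<in> ev_space.span ?S"
    if "\<forall>j. j \<notin> J \<longrightarrow> v j = 0" "(\<Sum>j\<in>J. lam j * v j) = 0" for v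
  proof -
    have "v = (\<Sum>j\<in>J - {j0}. (\<lambda>k. v j * b j k))"
      unfolding b_def by (rule annihilated_expansion[OF fin j0 that])
    also have "\<dots> \<in> ev_space.span ?S"
      by (rule ev_space.span_sum) (auto intro: ev_space.span_scale ev_space.span_base)
    finally show ?thesis .
  qed
  moreover have "finite ?S" using fin by simp
  ultimately show ?thesis by blast
qed

section \<open>The evaluation map is affine on cells\<close>

text \<open>On a cell, ev is affine in the edge lengths and the root position: ev_edge A is the
  derivative along the length of edge A, ev_shift_x and ev_shift_y along translations.\<close>

definition ev_edge :: "nat \<Rightarrow> nat \<Rightarrow> ivec list \<Rightarrow> nat set \<Rightarrow> leaf set \<Rightarrow> evidx \<Rightarrow> real" where
  "ev_edge r s D F A j = (case j of
      PX i \<Rightarrow> if i < r + s \<and> Mk i \<in> A then real_of_int (fst (sigma D A)) else 0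
    | PY i \<Rightarrow> if i < r + s \<and> Mk i \<in> A then real_of_int (snd (sigma D A)) else 0
    | FL i \<Rightarrow> if i \<in> F \<and> En i \<in> A then real_of_int (fst (D!i)) * real_of_int (snd (sigma D A))
                   - real_of_int (snd (D!i)) * real_of_int (fst (sigma D A)) else 0)"

definition ev_shift_x :: "nat \<Rightarrow> nat \<Rightarrow> ivec list \<Rightarrow> nat set \<Rightarrow> evidx \<Rightarrow> real" where
  "ev_shift_x r s D F j = (case j of PX i \<Rightarrow> if i < r + s then 1 else 0 | PY i \<Rightarrow> 0
     | FL i \<Rightarrow> if i \<in> F then - real_of_int (snd (D!i)) else 0)"

definition ev_shift_y :: "nat \<Rightarrow> nat \<Rightarrow> ivec list \<Rightarrow> nat set \<Rightarrow> evidx \<Rightarrow> real" where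
  "ev_shift_y r s D F j = (case j of PX i \<Rightarrow> 0 | PY i \<Rightarrow> if i < r + s then 1 else 0
     | FL i \<Rightarrow> if i \<in> F then real_of_int (fst (D!i)) else 0)"

abbreviation ev_tangents :: "nat \<Rightarrow> nat \<Rightarrow> ivec list \<Rightarrow> nat set \<Rightarrow> leaf set set \<Rightarrow> (evidx \<Rightarrow> real) set" where
  "ev_tangents r s D F Es \<equiv> ev_edge r s D F ` Es \<union> {ev_shift_x r s D F, ev_shift_y r s D F}"

lemma sum_if_diff:
  "(\<Sum>x\<in>A. if P x then f x - g x else (0::real)) =
    (\<Sum>x\<in>A. if P x then f x else 0) - (\<Sum>x\<in>A. if P x then g x else 0)"
  by (induction A rule: infinite_finite_induct) auto

lemma mult_sum_if_zero:
  "(c::real) * (\<Sum>x\<in>A. if P x then f x else 0) = (\<Sum>x\<in>A. if P x then c * f x else 0)"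
  by (simp add: sum_distrib_left if_distrib cong: if_cong)

lemma ev_expansion:
  assumes "finite (edgesS C)"
  shows "ev r s D F C j = (\<Sum>A\<in>edgesS C. \<bar>fst C A\<bar> * ev_edge r s D F A j)
    + fst (snd C) * ev_shift_x r s D F j + snd (snd C) * ev_shift_y r s D F j"
proof -
  have filter: "(\<Sum>A\<in>{A\<in>edgesS C. l \<in> A}. f A) = (\<Sum>A\<in>edgesS C. if l \<in> A then f A else 0)"
    for l and f :: "leaf set \<Rightarrow> real"
    using assms by (simp add: sum.inter_filter)
  show ?thesis
  proof (cases j)
    case (FL i)
    show ?thesis
    proof (cases "i \<in> F")
      case True
      let ?x = "real_of_int (fst (D!i))" and ?y = "real_of_int (snd (D!i))"
      let ?h = "\<lambda>g. (\<Sum>A\<in>edgesS C. if En i \<in> A then \<bar>fst C A\<bar> * real_of_int (g (sigma D A)) else 0)"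
      have "(\<Sum>A\<in>edgesS C. \<bar>fst C A\<bar> * ev_edge r s D F A j) =
         (\<Sum>A\<in>edgesS C. if En i \<in> A then ?x * (\<bar>fst C A\<bar> * real_of_int (snd (sigma D A)))
              - ?y * (\<bar>fst C A\<bar> * real_of_int (fst (sigma D A))) else 0)"
        using FL True by (intro sum.cong) (auto simp: ev_edge_def algebra_simps)
      also have "\<dots> = ?x * ?h snd - ?y * ?h fst"
        by (simp only: sum_if_diff mult_sum_if_zero)
      finally show ?thesis
        using FL True by (simp add: ev_def pos_def filter ev_shift_x_def ev_shift_y_def algebra_simps)
    qed (use FL in \<open>simp add: ev_def ev_edge_def ev_shift_x_def ev_shift_y_def\<close>)
  qed (auto simp: ev_def pos_def ev_edge_def ev_shift_x_def ev_shift_y_def filter intro!: sum.cong)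
qed

lemma ev_diff_in_span:
  assumes "finite (edgesS C1)" "edgesS C2 = edgesS C1"
  shows "(\<lambda>j. ev r s D F C1 j - ev r s D F C2 j) \<in> ev_space.span (ev_tangents r s D F (edgesS C1))"
proof -
  let ?S = "ev_tangents r s D F (edgesS C1)"
  let ?c = "\<lambda>A. \<bar>fst C1 A\<bar> - \<bar>fst C2 A\<bar>"
  have "(\<lambda>j. ev r s D F C1 j - ev r s D F C2 j) =
     (\<Sum>A\<in>edgesS C1. (\<lambda>j. ?c A * ev_edge r s D F A j))
     + (\<lambda>j. (fst (snd C1) - fst (snd C2)) * ev_shift_x r s D F j)
     + (\<lambda>j. (snd (snd C1) - snd (snd C2)) * ev_shift_y r s D F j)"
    using assms by (auto simp: ev_expansion sum_fun_apply algebra_simps sum_subtractf)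
  also have "\<dots> \<in> ev_space.span ?S"
    by (intro ev_space.span_add ev_space.span_sum) (auto intro: ev_space.span_scale ev_space.span_base)
  finally show ?thesis .
qed

definition ev_coords :: "nat \<Rightarrow> nat \<Rightarrow> nat set \<Rightarrow> evidx set" where
  "ev_coords r s F = PX ` {..<r+s} \<union> PY ` {..<r+s} \<union> FL ` F"

lemma finite_ev_coords: "finite F \<Longrightarrow> finite (ev_coords r s F)"
  by (simp add: ev_coords_def)

lemma card_ev_coords:
  assumes "finite F"
  shows "card (ev_coords r s F) = 2 * (r + s) + card F"
proof -
  have "card (PX ` {..<r+s} \<union> PY ` {..<r+s} \<union> FL ` F) =
      card (PX ` {..<r+s} \<union> PY ` {..<r+s}) + card (FL ` F)"
    by (rule card_Un_disjoint) (auto simp: assms)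
  also have "card (PX ` {..<r+s} \<union> PY ` {..<r+s}) = card (PX ` {..<r+s}) + card (PY ` {..<r+s})"
    by (rule card_Un_disjoint) auto
  finally show ?thesis by (simp add: ev_coords_def card_image inj_on_def)
qed

lemma sum_ev_coords:
  assumes "finite F" "F \<subseteq> {..<n}"
  shows "(\<Sum>j\<in>ev_coords r s F. h j) = (\<Sum>l\<in>leaves r s n.
    (case l of Mk m \<Rightarrow> h (PX m) + h (PY m) | En i \<Rightarrow> if i \<in> F then h (FL i) else 0))"
proof -
  let ?f = "\<lambda>l. (case l of Mk m \<Rightarrow> h (PX m) + h (PY m) | En i \<Rightarrow> if i \<in> F then h (FL i) else 0)"
  have "(\<Sum>j\<in>ev_coords r s F. h j) =
      (\<Sum>j\<in>PX ` {..<r+s} \<union> PY ` {..<r+s}. h j) + (\<Sum>j\<in>FL ` F. h j)"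
    unfolding ev_coords_def by (rule sum.union_disjoint) (auto simp: assms)
  also have "(\<Sum>j\<in>PX ` {..<r+s} \<union> PY ` {..<r+s}. h j) =
      (\<Sum>j\<in>PX ` {..<r+s}. h j) + (\<Sum>j\<in>PY ` {..<r+s}. h j)"
    by (rule sum.union_disjoint) auto
  finally have coords: "(\<Sum>j\<in>ev_coords r s F. h j) =
      (\<Sum>m<r+s. h (PX m) + h (PY m)) + (\<Sum>i\<in>F. h (FL i))"
    by (simp add: sum.reindex inj_on_def sum.distrib)
  have "(\<Sum>l\<in>leaves r s n. ?f l) = (\<Sum>l\<in>Mk ` {..<r+s}. ?f l) + (\<Sum>l\<in>En ` {..<n}. ?f l)"
    unfolding leaves_def by (rule sum.union_disjoint) auto
  also have "(\<Sum>l\<in>En ` {..<n}. ?f l) = (\<Sum>i<n. if i \<in> F then h (FL i) else 0)"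
    by (simp add: sum.reindex inj_on_def)
  also have "\<dots> = (\<Sum>i\<in>F. h (FL i))"
  proof -
    have "{..<n} \<inter> F = F" using assms(2) by blast
    then show ?thesis by (simp add: sum.If_cases)
  qed
  finally show ?thesis using coords by (simp add: sum.reindex inj_on_def)
qed

lemma cell_tangents_full_rank:
  assumes "is_desc r s D C" "ev r s D F C = P" "gen_pos r s D F (M_desc_closure r s D) P"
    and "finite (edgesS C)" "finite S" "ev_tangents r s D F (edgesS C) \<subseteq> ev_space.span S"
  shows "2 * (r + s) + card F \<le> card S"
proof (rule ccontr)
  assume small: "\<not> ?thesis"
  let ?M = "M_desc_closure r s D"
  let ?X = "{C' \<in> ?M. sgn \<circ> fst C' = sgn \<circ> fst C}"
  have C_M: "C \<in> ?M" unfolding M_desc_closure_def using assms(1) closure_subset by blast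
  then have cell: "?X \<in> cells ?M" unfolding cells_def by blast
  have same_edges: "edgesS C' = edgesS C" if "C' \<in> ?X" for C'
  proof -
    have "sgn (fst C' A) = sgn (fst C A)" for A using that by (simp add: comp_def fun_eq_iff)
    then have "(fst C' A \<noteq> 0) = (fst C A \<noteq> 0)" for A by (metis sgn_eq_0_iff)
    then show ?thesis unfolding edgesS_def by simp
  qed
  have span_sub: "ev_space.span (ev_tangents r s D F (edgesS C)) \<subseteq> ev_space.span S"
    using ev_space.span_mono[OF assms(6)] ev_space.span_span by simp
  have "\<forall>p\<in>ev r s D F ` ?X. \<forall>q\<in>ev r s D F ` ?X. (\<lambda>j. p j - q j) \<in> ev_space.span S"
  proof (intro ballI)
    fix p q assume "p \<in> ev r s D F ` ?X" "q \<in> ev r s D F ` ?X"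
    then obtain C1 C2 where C12: "C1 \<in> ?X" "C2 \<in> ?X" "p = ev r s D F C1" "q = ev r s D F C2"
      by blast
    have "(\<lambda>j. ev r s D F C1 j - ev r s D F C2 j) \<in> ev_space.span (ev_tangents r s D F (edgesS C1))"
      using same_edges C12(1,2) assms(4) by (intro ev_diff_in_span) auto
    then show "(\<lambda>j. p j - q j) \<in> ev_space.span S"
      using span_sub same_edges[OF C12(1)] C12(3,4) by auto
  qed
  then have "aff_dim_fn (ev r s D F ` ?X) < 2 * (r + s) + card F"
    using small assms(5) by (intro aff_dim_fn_less) auto
  then have "P \<notin> ev r s D F ` ?X" using assms(3) cell unfolding gen_pos_def by blast
  then show False using C_M assms(2) by auto
qed

section \<open>Charges\<close>

text \<open>A charge puts a vector wm m on the marking Mk m and a multiple cf i of the normal of the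
  fixed end y_i on it. It defines a linear functional on the target of ev, and this functional
  evaluates on ev_edge r s D F A to the inner product of the total charge below A with the
  direction of A.\<close>

definition rot90 :: "real \<times> real \<Rightarrow> real \<times> real" where
  "rot90 x = (- snd x, fst x)"

definition end_normal :: "ivec list \<Rightarrow> nat \<Rightarrow> real \<times> real" where
  "end_normal D i = rot90 (edge_dir D {En i})"

definition charge_functional :: "(nat \<Rightarrow> real \<times> real) \<Rightarrow> (nat \<Rightarrow> real) \<Rightarrow> evidx \<Rightarrow> real" where
  "charge_functional wm cf j = (case j of PX m \<Rightarrow> fst (wm m) | PY m \<Rightarrow> snd (wm m) | FL i \<Rightarrow> cf i)"

definition leaf_charge ::
    "ivec list \<Rightarrow> nat set \<Rightarrow> (nat \<Rightarrow> real \<times> real) \<Rightarrow> (nat \<Rightarrow> real) \<Rightarrow> leaf \<Rightarrow> real \<times> real" where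
  "leaf_charge D F wm cf l =
     (case l of Mk m \<Rightarrow> wm m | En i \<Rightarrow> if i \<in> F then cf i *\<^sub>R end_normal D i else 0)"

definition charge ::
    "ivec list \<Rightarrow> nat set \<Rightarrow> (nat \<Rightarrow> real \<times> real) \<Rightarrow> (nat \<Rightarrow> real) \<Rightarrow> leaf set \<Rightarrow> real \<times> real" where
  "charge D F wm cf A = (\<Sum>l\<in>A. leaf_charge D F wm cf l)"

lemma inner_real_pair: "(x :: real \<times> real) \<bullet> y = fst x * fst y + snd x * snd y"
  by (cases x, cases y) simp

lemma inner_rot90_self: "rot90 x \<bullet> x = 0"
  by (simp add: inner_real_pair rot90_def)

lemma rot90_sum: "rot90 (\<Sum>x\<in>A. f x) = (\<Sum>x\<in>A. rot90 (f x))"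
  by (simp add: rot90_def prod_eq_iff fst_sum snd_sum sum_negf)

lemma rot90_add: "rot90 (x + y) = rot90 x + rot90 y"
  by (simp add: rot90_def)

lemma rot90_eq_0_iff: "rot90 x = 0 \<longleftrightarrow> x = 0"
  by (cases x) (auto simp: rot90_def zero_prod_def)

lemma functional_ev_edge:
  assumes "finite F" "F \<subseteq> {..<n}" "A \<subseteq> leaves r s n"
  shows "(\<Sum>j\<in>ev_coords r s F. charge_functional wm cf j * ev_edge r s D F A j) =
    charge D F wm cf A \<bullet> edge_dir D A"
proof -
  have "(\<Sum>j\<in>ev_coords r s F. charge_functional wm cf j * ev_edge r s D F A j) =
     (\<Sum>l\<in>leaves r s n. if l \<in> A then leaf_charge D F wm cf l \<bullet> edge_dir D A else 0)"
    unfolding sum_ev_coords[OF assms(1,2)]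
  proof (rule sum.cong[OF refl])
    fix l assume l: "l \<in> leaves r s n"
    show "(case l of Mk m \<Rightarrow> charge_functional wm cf (PX m) * ev_edge r s D F A (PX m)
            + charge_functional wm cf (PY m) * ev_edge r s D F A (PY m)
          | En i \<Rightarrow> if i \<in> F then charge_functional wm cf (FL i) * ev_edge r s D F A (FL i) else 0) =
        (if l \<in> A then leaf_charge D F wm cf l \<bullet> edge_dir D A else 0)"
    proof (cases l)
      case (Mk m)
      then have "m < r + s" using l by (auto simp: leaves_def)
      then show ?thesis
        using Mk by (simp add: charge_functional_def ev_edge_def leaf_charge_def inner_real_pair edge_dir_def)
    next
      case (En i)
      then show ?thesis
        by (simp add: charge_functional_def ev_edge_def leaf_charge_def inner_real_pair edge_dir_def
            end_normal_def rot90_def sigma_En algebra_simps)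
    qed
  qed
  also have "\<dots> = (\<Sum>l\<in>A. leaf_charge D F wm cf l \<bullet> edge_dir D A)"
  proof -
    have "leaves r s n \<inter> A = A" using assms(3) by blast
    then show ?thesis using finite_leaves by (simp add: sum.If_cases)
  qed
  also have "\<dots> = charge D F wm cf A \<bullet> edge_dir D A"
    by (simp add: charge_def inner_sum_left)
  finally show ?thesis .
qed

lemma functional_ev_shift:
  assumes "finite F" "F \<subseteq> {..<n}"
  shows "(\<Sum>j\<in>ev_coords r s F. charge_functional wm cf j * ev_shift_x r s D F j) =
      fst (charge D F wm cf (leaves r s n))"
    and "(\<Sum>j\<in>ev_coords r s F. charge_functional wm cf j * ev_shift_y r s D F j) =
      snd (charge D F wm cf (leaves r s n))"
proof -
  have "m < r + s" if "Mk m \<in> leaves r s n" for m using that by (auto simp: leaves_def)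
  then show "(\<Sum>j\<in>ev_coords r s F. charge_functional wm cf j * ev_shift_x r s D F j) =
      fst (charge D F wm cf (leaves r s n))"
    "(\<Sum>j\<in>ev_coords r s F. charge_functional wm cf j * ev_shift_y r s D F j) =
      snd (charge D F wm cf (leaves r s n))"
    unfolding sum_ev_coords[OF assms] charge_def fst_sum snd_sum
    by (auto intro!: sum.cong split: leaf.split
        simp: charge_functional_def ev_shift_x_def ev_shift_y_def leaf_charge_def end_normal_def
          rot90_def edge_dir_def sigma_En)
qed

lemma ev_coords_support:
  "j \<notin> ev_coords r s F \<Longrightarrow> ev_edge r s D F A j = 0"
  "j \<notin> ev_coords r s F \<Longrightarrow> ev_shift_x r s D F j = 0"
  "j \<notin> ev_coords r s F \<Longrightarrow> ev_shift_y r s D F j = 0"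
  by (cases j; auto simp: ev_coords_def ev_edge_def ev_shift_x_def ev_shift_y_def)+

text \<open>The functional of a charge with vanishing total that is orthogonal to every edge
  direction kills all tangents of the cell.\<close>
lemma balanced_charge_small_span:
  assumes F: "finite F" "F \<subseteq> {..<n}"
    and edges: "\<forall>A\<in>Es. A \<subseteq> leaves r s n \<and> charge D F wm cf A \<bullet> edge_dir D A = 0"
    and total: "charge D F wm cf (leaves r s n) = 0"
    and nonzero: "j0 \<in> ev_coords r s F" "charge_functional wm cf j0 \<noteq> 0"
  shows "\<exists>S. finite S \<and> card S < 2 * (r + s) + card F \<and> ev_tangents r s D F Es \<subseteq> ev_space.span S"
proof -
  let ?lam = "charge_functional wm cf" and ?J = "ev_coords r s F"
  obtain S where S: "finite S" "card S < card ?J"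
    "{v. (\<forall>j. j \<notin> ?J \<longrightarrow> v j = 0) \<and> (\<Sum>j\<in>?J. ?lam j * v j) = 0} \<subseteq> ev_space.span S"
    using annihilated_in_small_span[of ?J j0 ?lam] finite_ev_coords[OF F(1)] nonzero by blast
  have "ev_edge r s D F A \<in> ev_space.span S" if "A \<in> Es" for A
    using that edges ev_coords_support(1)
      functional_ev_edge[OF F, where A=A and wm=wm and cf=cf and D=D and r=r and s=s]
    by (intro subsetD[OF S(3)]) auto
  moreover have "ev_shift_x r s D F \<in> ev_space.span S" "ev_shift_y r s D F \<in> ev_space.span S"
    using functional_ev_shift[OF F, where wm=wm and cf=cf and D=D and r=r and s=s] total
      ev_coords_support(2,3)
    by (auto intro!: subsetD[OF S(3)])
  ultimately show ?thesis using S(1,2) card_ev_coords[OF F(1)] by auto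
qed

definition mark_charge :: "nat \<Rightarrow> real \<times> real \<Rightarrow> nat \<Rightarrow> real \<times> real" where
  "mark_charge a w = (\<lambda>m. if m = a then w else 0)"

definition end_charge :: "nat \<Rightarrow> nat \<Rightarrow> real" where
  "end_charge a = (\<lambda>i. if i = a then 1 else 0)"

lemma charge_add:
  "charge D F (\<lambda>m. wm1 m + wm2 m) (\<lambda>i. cf1 i + cf2 i) A = charge D F wm1 cf1 A + charge D F wm2 cf2 A"
proof -
  have "leaf_charge D F (\<lambda>m. wm1 m + wm2 m) (\<lambda>i. cf1 i + cf2 i) l =
      leaf_charge D F wm1 cf1 l + leaf_charge D F wm2 cf2 l" for l
    by (cases l) (auto simp: leaf_charge_def scaleR_add_left)
  then show ?thesis by (simp add: charge_def sum.distrib)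
qed

lemma charge_sum:
  assumes "finite K"
  shows "charge D F (\<lambda>m. \<Sum>k\<in>K. W k m) (\<lambda>i. \<Sum>k\<in>K. CF k i) A = (\<Sum>k\<in>K. charge D F (W k) (CF k) A)"
proof -
  have "leaf_charge D F (\<lambda>m. \<Sum>k\<in>K. W k m) (\<lambda>i. \<Sum>k\<in>K. CF k i) l =
      (\<Sum>k\<in>K. leaf_charge D F (W k) (CF k) l)" for l
    by (cases l) (auto simp: leaf_charge_def scaleR_sum_left)
  then show ?thesis by (simp add: charge_def sum.swap[of _ K A])
qed

lemma charge_mark_charge:
  "finite A \<Longrightarrow> charge D F (mark_charge a w) (\<lambda>_. 0) A = (if Mk a \<in> A then w else 0)"
  unfolding charge_def
  by (subst sum.cong[OF refl, where h = "\<lambda>l. if l = Mk a then w else 0"])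
    (auto simp: leaf_charge_def mark_charge_def split: leaf.split)

lemma charge_end_charge:
  "finite A \<Longrightarrow> a \<in> F \<Longrightarrow> charge D F (\<lambda>_. 0) (end_charge a) A = (if En a \<in> A then end_normal D a else 0)"
  unfolding charge_def
  by (subst sum.cong[OF refl, where h = "\<lambda>l. if l = En a then end_normal D a else 0"])
    (auto simp: leaf_charge_def end_charge_def split: leaf.split)

lemma charge_restrict:
  assumes "\<forall>m. Mk m \<notin> I \<longrightarrow> wm m = 0" "\<forall>i. En i \<notin> I \<longrightarrow> cf i = 0" "finite A"
  shows "charge D F wm cf A = charge D F wm cf (A \<inter> I)"
proof -
  have "(\<Sum>l\<in>A - I. leaf_charge D F wm cf l) = 0"
    by (rule sum.neutral) (use assms(1,2) in \<open>auto simp: leaf_charge_def split: leaf.split\<close>)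
  then show ?thesis
    unfolding charge_def using sum.Int_Diff[OF assms(3), of "leaf_charge D F wm cf" I] by simp
qed

lemma charge_empty: "charge D F wm cf {} = 0"
  by (simp add: charge_def)

text \<open>Certificate that the conditions below I fix the line containing the edge I: a charge
  supported on I whose total is normal to I and which is orthogonal to every edge below I.\<close>
definition rigid_charge ::
    "ivec list \<Rightarrow> nat set \<Rightarrow> leaf set set \<Rightarrow> leaf set \<Rightarrow> (nat \<Rightarrow> real \<times> real) \<Rightarrow> (nat \<Rightarrow> real) \<Rightarrow> bool" where
  "rigid_charge D F Es I wm cf \<longleftrightarrow> (\<forall>m. Mk m \<notin> I \<longrightarrow> wm m = 0) \<and> (\<forall>i. En i \<notin> I \<longrightarrow> cf i = 0) \<and>
     charge D F wm cf I = rot90 (edge_dir D I) \<and>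
     (\<forall>A\<in>Es. A \<subseteq> I \<longrightarrow> charge D F wm cf A \<bullet> edge_dir D A = 0)"

lemma rigid_charge_restrict:
  "rigid_charge D F Es I wm cf \<Longrightarrow> finite A \<Longrightarrow> charge D F wm cf A = charge D F wm cf (A \<inter> I)"
  by (rule charge_restrict) (auto simp: rigid_charge_def)

context curve_tree
begin

lemma rigid_charge_fixed_end:
  assumes "i \<in> F"
  shows "rigid_charge D F Es {En i} (\<lambda>_. 0) (end_charge i)"
  unfolding rigid_charge_def
proof (intro conjI allI impI ballI)
  show "charge D F (\<lambda>_. 0) (end_charge i) {En i} = rot90 (edge_dir D {En i})"
    using assms by (simp add: charge_end_charge end_normal_def)
  fix A assume "A \<in> Es" "A \<subseteq> {En i}"
  then show "charge D F (\<lambda>_. 0) (end_charge i) A \<bullet> edge_dir D A = 0"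
    using edge_not_subset_singleton by blast
qed (auto simp: end_charge_def)

lemma rigid_charge_marked_vertex:
  assumes I: "I \<in> Es" and m: "{Mk m} \<in> ch I"
  shows "rigid_charge D F Es I (mark_charge m (rot90 (edge_dir D I))) (\<lambda>_. 0)"
  unfolding rigid_charge_def
proof (intro conjI allI impI ballI)
  have I_vert: "I \<in> Vs" using I by (simp add: verts_eq)
  have m_I: "Mk m \<in> I" using child_psubset[OF m] by blast
  then show "charge D F (mark_charge m (rot90 (edge_dir D I))) (\<lambda>_. 0) I = rot90 (edge_dir D I)"
    using finite_edge[OF I] by (simp add: charge_mark_charge)
  fix A assume A: "A \<in> Es" "A \<subseteq> I"
  show "charge D F (mark_charge m (rot90 (edge_dir D I))) (\<lambda>_. 0) A \<bullet> edge_dir D A = 0"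
  proof (cases "Mk m \<in> A")
    case True
    then have "A = I" using mark_child_edge_iff[OF I_vert m A(1)] A(2) by blast
    then show ?thesis using finite_edge[OF I] True by (simp add: charge_mark_charge inner_rot90_self)
  qed (simp add: charge_mark_charge finite_edge[OF A(1)])
next
  fix k assume "Mk k \<notin> I"
  then show "mark_charge m (rot90 (edge_dir D I)) k = 0"
    using child_psubset[OF m] by (auto simp: mark_charge_def)
qed simp

lemma sum_children_charges_below:
  assumes V: "V \<in> Vs" and W: "\<forall>c\<in>ch V. rigid_charge D F Es c (W c) (CF c)" and "finite A"
    and c0: "c0 \<in> ch V" "A \<subseteq> c0"
  shows "(\<Sum>c\<in>ch V. charge D F (W c) (CF c) A) = charge D F (W c0) (CF c0) A"
proof -
  have "(\<Sum>c\<in>ch V - {c0}. charge D F (W c) (CF c) A) = 0"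
  proof (rule sum.neutral, intro ballI)
    fix c assume c: "c \<in> ch V - {c0}"
    then have "A \<inter> c = {}" using children_disjoint[OF V c0(1), of c] c0(2) by blast
    then show "charge D F (W c) (CF c) A = 0"
      using rigid_charge_restrict[of D F Es c "W c" "CF c" A, OF _ \<open>finite A\<close>] W c by (simp add: charge_empty)
  qed
  then show ?thesis using finite_children[OF V] c0(1) by (simp add: sum.remove)
qed

lemma sum_children_charges_above:
  assumes V: "V \<in> Vs" and W: "\<forall>c\<in>ch V. rigid_charge D F Es c (W c) (CF c)" and "finite A"
    and "V \<subseteq> A"
  shows "(\<Sum>c\<in>ch V. charge D F (W c) (CF c) A) = rot90 (edge_dir D V)"
proof -
  have "(\<Sum>c\<in>ch V. charge D F (W c) (CF c) A) = (\<Sum>c\<in>ch V. rot90 (edge_dir D c))"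
  proof (rule sum.cong[OF refl])
    fix c assume c: "c \<in> ch V"
    have "A \<inter> c = c" using child_psubset[OF c] \<open>V \<subseteq> A\<close> by blast
    then show "charge D F (W c) (CF c) A = rot90 (edge_dir D c)"
      using rigid_charge_restrict[of D F Es c "W c" "CF c" A, OF _ \<open>finite A\<close>] W c
      by (simp add: rigid_charge_def)
  qed
  also have "\<dots> = rot90 (edge_dir D V)" using edge_dir_children[OF V] by (simp add: rot90_sum)
  finally show ?thesis .
qed

lemma rigid_charge_children:
  assumes V: "V \<in> Vs" and W: "\<forall>c\<in>ch V. rigid_charge D F Es c (W c) (CF c)"
  shows "rigid_charge D F Es V (\<lambda>m. \<Sum>c\<in>ch V. W c m) (\<lambda>i. \<Sum>c\<in>ch V. CF c i)"
  unfolding rigid_charge_def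
proof (intro conjI allI impI ballI)
  note charge_sum[OF finite_children[OF V]]
  note total = sum_children_charges_above[OF V W finite_vert[OF V] order_refl, folded this]
  show "charge D F (\<lambda>m. \<Sum>c\<in>ch V. W c m) (\<lambda>i. \<Sum>c\<in>ch V. CF c i) V = rot90 (edge_dir D V)"
    by (rule total)
  fix A assume A: "A \<in> Es" "A \<subseteq> V"
  show "charge D F (\<lambda>m. \<Sum>c\<in>ch V. W c m) (\<lambda>i. \<Sum>c\<in>ch V. CF c i) A \<bullet> edge_dir D A = 0"
  proof (cases "A = V")
    case True
    then show ?thesis using total by (simp add: inner_rot90_self)
  next
    case False
    then have "A \<subset> V" "A \<in> subtrees" using A by (auto simp: subtrees_def)
    then obtain c0 where c0: "c0 \<in> ch V" "A \<subseteq> c0" using subtree_below_child[OF V] by blast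
    then show ?thesis
      using sum_children_charges_below[OF V W finite_edge[OF A(1)] c0] W A(1)
      by (simp add: charge_sum[OF finite_children[OF V]] rigid_charge_def)
  qed
next
  fix m assume "Mk m \<notin> V"
  then have "\<forall>c\<in>ch V. Mk m \<notin> c" using child_psubset by blast
  then show "(\<Sum>c\<in>ch V. W c m) = 0" using W by (auto simp: rigid_charge_def intro: sum.neutral)
next
  fix i assume "En i \<notin> V"
  then have "\<forall>c\<in>ch V. En i \<notin> c" using child_psubset by blast
  then show "(\<Sum>c\<in>ch V. CF c i) = 0" using W by (auto simp: rigid_charge_def intro: sum.neutral)
qed

lemma rigid_charge_rigid_children:
  assumes V: "V \<in> Vs" and rigid: "\<forall>c\<in>ch V. \<exists>wm cf. rigid_charge D F Es c wm cf"
  shows "\<exists>wm cf. rigid_charge D F Es V wm cf"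
proof -
  have "\<forall>c\<in>ch V. \<exists>p. rigid_charge D F Es c (fst p) (snd p)" using rigid by simp
  then obtain p where "\<forall>c\<in>ch V. rigid_charge D F Es c (fst (p c)) (snd (p c))" by metis
  from rigid_charge_children[OF V this] show ?thesis by blast
qed

lemma rigid_charge_exists:
  "I \<in> subtrees \<Longrightarrow> \<not> is_marking I \<Longrightarrow> \<not> reaches_free_end I \<Longrightarrow> \<exists>wm cf. rigid_charge D F Es I wm cf"
proof (induction "card I" arbitrary: I rule: less_induct)
  case less
  show ?case
  proof (cases "I \<in> Es")
    case False
    then obtain l where l: "I = {l}" using less.prems(1) by (auto simp: subtrees_def)
    then obtain i where "I = {En i}" using less.prems(2) by (cases l) (auto simp: is_marking_def)
    moreover have "i \<in> F" using less.prems(3) calculation by (simp add: reaches_free_end_En)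
    ultimately show ?thesis using rigid_charge_fixed_end by blast
  next
    case I: True
    have I_vert: "I \<in> Vs" using I by (simp add: verts_eq)
    show ?thesis
    proof (cases "has_mark C I")
      case True
      then obtain m where "{Mk m} \<in> ch I" by (auto simp: has_mark_def)
      then show ?thesis using rigid_charge_marked_vertex[OF I] by blast
    next
      case False
      have "\<exists>wm cf. rigid_charge D F Es c wm cf" if c: "c \<in> ch I" for c
      proof -
        have "\<not> is_marking c" using False c by (auto simp: has_mark_iff)
        moreover have "\<not> reaches_free_end c"
          using less.prems(3) reaches_free_end_edge[OF I] False c by blast
        moreover have "card c < card I"
          using child_psubset[OF c] finite_edge[OF I] by (simp add: psubset_card_mono)
        ultimately show ?thesis using less.hyps child_in_subtrees[OF I_vert c] by blast
      qed
      then show ?thesis using rigid_charge_rigid_children[OF I_vert] by blast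
    qed
  qed
qed

end

section \<open>Orientations\<close>

lemma children_cong: assumes "edgesS C1 = edgesS C2" shows "children C1 = children C2"
  by (rule ext) (simp only: children_def assms)

lemma edges_at_cong: assumes "edgesS C1 = edgesS C2" shows "edges_at C1 = edges_at C2"
  by (rule ext) (simp only: edges_at_def children_cong[OF assms])

lemma noncontr_at_cong: assumes "edgesS C1 = edgesS C2" shows "noncontr_at D C1 = noncontr_at D C2"
  by (rule ext) (simp only: noncontr_at_def edges_at_cong[OF assms])

lemma marks_cong:
  assumes "edgesS C1 = edgesS C2"
  shows "has_real_mark r C1 = has_real_mark r C2" "has_cplx_mark r s C1 = has_cplx_mark r s C2"
    "has_mark C1 = has_mark C2"
  by (rule ext, simp only: has_real_mark_def has_cplx_mark_def has_mark_def children_cong[OF assms])+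

lemma verts_cong: assumes "edgesS C1 = edgesS C2" shows "verts r s n C1 = verts r s n C2"
  by (simp only: verts_def assms)

lemma mik_cong: assumes "edgesS C1 = edgesS C2" shows "mik D C1 = mik D C2"
  by (rule ext) (simp only: mik_def noncontr_at_cong[OF assms])

lemma curve_data_cong:
  assumes "edgesS C1 = edgesS C2" shows "is_curve_data r s D C1 = is_curve_data r s D C2"
  by (simp only: is_curve_data_def assms)

definition unorient :: "curve \<Rightarrow> curve" where
  "unorient C = ((\<lambda>A. \<bar>fst C A\<bar>), snd C)"

lemma edgesS_unorient: "edgesS (unorient C) = edgesS C"
  by (simp add: edgesS_def unorient_def)

lemma pos_unorient: "pos D (unorient C) l = pos D C l"
  by (simp add: pos_def edgesS_unorient) (simp add: unorient_def)

lemma ev_unorient: "ev r s D F (unorient C) = ev r s D F C"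
  unfolding ev_def pos_unorient ..

section \<open>Descendant curves through points in general position\<close>

locale desc_in_general_position = curve_tree +
  assumes desc: "is_desc r s D C"
    and dim: "r + 2 * s + card F + 1 = length D"
    and full_rank:
      "\<And>S. finite S \<Longrightarrow> ev_tangents r s D F Es \<subseteq> ev_space.span S \<Longrightarrow> 2 * (r + s) + card F \<le> card S"
begin

lemma no_balanced_charge:
  assumes "\<forall>A\<in>Es. charge D F wm cf A \<bullet> edge_dir D A = 0" "charge D F wm cf Lv = 0"
    and "j0 \<in> ev_coords r s F" "charge_functional wm cf j0 \<noteq> 0"
  shows False
proof -
  have "\<forall>A\<in>Es. A \<subseteq> Lv \<and> charge D F wm cf A \<bullet> edge_dir D A = 0"
    using assms(1) edge_subset_root root_subset_leaves by blast
  from balanced_charge_small_span[OF finite_fixed_ends fixed_ends this assms(2-4)]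
  show False using full_rank by fastforce
qed

lemma marking_coords: "a < r + s \<Longrightarrow> PX a \<in> ev_coords r s F \<and> PY a \<in> ev_coords r s F"
  by (simp add: ev_coords_def)

lemma fixed_end_coord: "i \<in> F \<Longrightarrow> FL i \<in> ev_coords r s F"
  by (simp add: ev_coords_def)

text \<open>Two markings at one vertex: moving one against the other is a balanced charge.\<close>
lemma one_marking_per_vertex:
  assumes V: "V \<in> Vs" and a: "{Mk a} \<in> ch V" and b: "{Mk b} \<in> ch V"
  shows "a = b"
proof (rule ccontr)
  assume "a \<noteq> b"
  let ?wm = "\<lambda>m. mark_charge a (1,0) m + mark_charge b (-1,0) m" and ?cf = "\<lambda>i::nat. (0::real) + 0"
  have charge: "charge D F ?wm ?cf A = (if Mk a \<in> A then (1,0) else 0) + (if Mk b \<in> A then (-1,0) else 0)"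
    if "finite A" for A
    using charge_add[of D F "mark_charge a (1,0)" "mark_charge b (-1,0)" "\<lambda>_. 0" "\<lambda>_. 0" A]
      charge_mark_charge[OF that] by simp
  have "\<forall>A\<in>Es. charge D F ?wm ?cf A \<bullet> edge_dir D A = 0"
  proof
    fix A assume A: "A \<in> Es"
    have "Mk a \<in> A \<longleftrightarrow> Mk b \<in> A"
      using mark_child_edge_iff[OF V a A] mark_child_edge_iff[OF V b A] by simp
    then show "charge D F ?wm ?cf A \<bullet> edge_dir D A = 0"
      using charge[OF finite_edge[OF A]] by (auto simp: inner_real_pair)
  qed
  moreover have "charge D F ?wm ?cf Lv = 0"
  proof -
    have "Mk a \<in> Lv" "Mk b \<in> Lv"
      using child_psubset[OF a] child_psubset[OF b] vert_subset_root[OF V] root_subset_leaves by blast+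
    then show ?thesis using charge[OF finite_leaves] by (simp add: zero_prod_def)
  qed
  moreover have "charge_functional ?wm ?cf (PX a) \<noteq> 0"
    using \<open>a \<noteq> b\<close> by (simp add: charge_functional_def mark_charge_def)
  ultimately show False
    using no_balanced_charge marking_coords[OF marking_child_bound[OF V a]] by blast
qed

lemma num_markings_le_1: "V \<in> Vs \<Longrightarrow> num_markings V \<le> 1"
  using one_marking_per_vertex finite_children
  by (auto simp: num_markings_def is_marking_def card_le_Suc0_iff_eq)

definition valence_excess :: "leaf set \<Rightarrow> int" where
  "valence_excess V = int (card (ch V)) - 2 - int (num_cplx_markings V)"

lemma card_edges_at:
  assumes V: "V \<in> Vs"
  shows "card (edges_at C V) = card (ch V) + 1"
proof -
  have "V \<notin> ch V" using child_psubset by blast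
  then show ?thesis using finite_children[OF V] by (simp add: edges_at_def)
qed

lemma valence_excess_nonneg:
  assumes V: "V \<in> Vs"
  shows "valence_excess V \<ge> 0"
proof (cases "num_cplx_markings V = 0")
  case True
  then show ?thesis using two_le_card_children[OF V] by (simp add: valence_excess_def)
next
  case False
  then have "num_cplx_markings V = 1"
    using num_cplx_markings_le[OF V] num_markings_le_1[OF V] by simp
  moreover have "{c \<in> ch V. is_cplx_marking r s c} \<noteq> {}"
    using False by (metis card.empty num_cplx_markings_def)
  then obtain i where "r \<le> i" "i < r + s" "{Mk i} \<in> ch V"
    by (auto simp: is_cplx_marking_def)
  then have "card (edges_at C V) = 4" using desc V by (simp add: is_desc_def)
  ultimately show ?thesis using card_edges_at[OF V] by (simp add: valence_excess_def)
qed

lemma sum_valence_excess: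
  "(\<Sum>V\<in>Vs. valence_excess V) = int (2 * (r + s) + card F) - 2 - int (card Es)"
proof -
  have "(\<Sum>V\<in>Vs. valence_excess V) =
      (\<Sum>V\<in>Vs. int (card (ch V))) - 2 * int (card Vs) - (\<Sum>V\<in>Vs. int (num_cplx_markings V))"
    by (simp add: valence_excess_def sum_subtractf)
  also have "\<dots> = int (card Es) + int (card R) - 2 * int (card Es + 1) - int s"
    using sum_card_children sum_num_cplx_markings card_verts by simp
  also have "card R = r + s + n - 1" using card_root card_leaves[of r s n] by simp
  finally show ?thesis using dim ends_nonempty by simp
qed

lemma card_ev_tangents: "card (ev_tangents r s D F Es) \<le> card Es + 2"
proof -
  have "card (ev_tangents r s D F Es) \<le> card (ev_edge r s D F ` Es) + card {ev_shift_x r s D F, ev_shift_y r s D F}"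
    by (rule card_Un_le)
  also have "card (ev_edge r s D F ` Es) \<le> card Es" by (rule card_image_le[OF finite_edges])
  also have "card {ev_shift_x r s D F, ev_shift_y r s D F} \<le> 2" by (simp add: card_insert_le_m1)
  finally show ?thesis by simp
qed

text \<open>The cell has dimension card Es + 2 and must fill the target: all valences are minimal.\<close>
lemma valence_excess_zero: "V \<in> Vs \<Longrightarrow> valence_excess V = 0"
proof -
  assume V: "V \<in> Vs"
  have "(\<Sum>V\<in>Vs. valence_excess V) = 0"
  proof (rule ccontr)
    assume "(\<Sum>V\<in>Vs. valence_excess V) \<noteq> 0"
    then have "(\<Sum>V\<in>Vs. valence_excess V) > 0"
      using valence_excess_nonneg by (simp add: sum_nonneg order_le_neq_trans)
    then have "card Es + 2 < 2 * (r + s) + card F" using sum_valence_excess by simp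
    moreover have "2 * (r + s) + card F \<le> card (ev_tangents r s D F Es)"
      using full_rank[OF _ ev_space.span_superset] finite_edges by simp
    ultimately show False using card_ev_tangents by simp
  qed
  then show ?thesis using sum_nonneg_eq_0_iff[OF finite_verts] valence_excess_nonneg V by blast
qed

lemma card_children: "V \<in> Vs \<Longrightarrow> card (ch V) = 2 + num_cplx_markings V"
  using valence_excess_zero[of V] by (simp add: valence_excess_def)

lemma card_edges_eq: "card Es + 2 = 2 * (r + s) + card F"
  using valence_excess_zero sum_valence_excess by simp

text \<open>A contracted bounded edge would not move the image, leaving card Es + 1 tangents.\<close>
lemma edge_not_contracted:
  assumes A: "A \<in> Es"
  shows "sigma D A \<noteq> (0,0)"
proof
  assume "sigma D A = (0,0)"
  then have zero: "ev_edge r s D F A = 0" by (auto simp: ev_edge_def fun_eq_iff split: evidx.split)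
  let ?S = "ev_edge r s D F ` (Es - {A}) \<union> {ev_shift_x r s D F, ev_shift_y r s D F}"
  have "ev_tangents r s D F Es \<subseteq> ev_space.span ?S"
  proof
    fix x assume "x \<in> ev_tangents r s D F Es"
    moreover have "ev_edge r s D F A \<in> ev_space.span ?S" using zero ev_space.span_zero by simp
    ultimately show "x \<in> ev_space.span ?S"
      by (cases "x = ev_edge r s D F A") (auto intro: ev_space.span_base)
  qed
  then have "2 * (r + s) + card F \<le> card ?S" using full_rank finite_edges by simp
  moreover have "card ?S \<le> card Es + 1"
  proof -
    have "card ?S \<le> card (ev_edge r s D F ` (Es - {A})) + card {ev_shift_x r s D F, ev_shift_y r s D F}"
      by (rule card_Un_le)
    also have "card (ev_edge r s D F ` (Es - {A})) \<le> card (Es - {A})"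
      by (rule card_image_le) (simp add: finite_edges)
    also have "card (Es - {A}) = card Es - 1" using A finite_edges by simp
    also have "card {ev_shift_x r s D F, ev_shift_y r s D F} \<le> 2" by (simp add: card_insert_le_m1)
    finally have "card ?S \<le> card Es - 1 + 2" by simp
    moreover have "0 < card Es" using A finite_edges card_gt_0_iff by blast
    ultimately show ?thesis by linarith
  qed
  ultimately show False using card_edges_eq by simp
qed

lemma nonmarking_child_not_contracted:
  assumes V: "V \<in> Vs" and c: "c \<in> ch V" "\<not> is_marking c"
  shows "sigma D c \<noteq> (0,0)"
proof (cases "c \<in> Es")
  case True
  then show ?thesis using edge_not_contracted by blast
next
  case False
  then obtain l where l: "c = {l}" "l \<in> R" using child_in_subtrees[OF V c(1)] by (auto simp: subtrees_def)
  then obtain i where i: "l = En i" using c(2) by (cases l) (auto simp: is_marking_def)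
  have "i < n" using l(2) i by (auto simp: root_eq leaves_def)
  then show ?thesis using l i sigma_En end_dir_nonzero by auto
qed

lemma vert_not_contracted: "V \<in> Vs \<Longrightarrow> sigma D V \<noteq> (0,0)"
  using edge_not_contracted sigma_root_nonzero by (auto simp: verts_eq)

lemma points_up_subtree:
  "c \<in> subtrees \<Longrightarrow> \<not> is_marking c \<Longrightarrow> points_up c \<longleftrightarrow> \<not> reaches_free_end c"
  using subtree_neq_root by (simp add: points_up_def)

text \<open>At a marked vertex, a child c0 that is rigid could be balanced against the marking.\<close>
lemma marked_vertex_child_reaches_free_end:
  assumes V: "V \<in> Vs" and m: "{Mk m} \<in> ch V" and c0: "c0 \<in> ch V" "\<not> is_marking c0"
  shows "reaches_free_end c0"
proof (rule ccontr)
  assume "\<not> reaches_free_end c0"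
  then obtain wm0 cf0 where R0: "rigid_charge D F Es c0 wm0 cf0"
    using rigid_charge_exists[OF child_in_subtrees[OF V c0(1)] c0(2)] by blast
  define x where "x = rot90 (edge_dir D c0)"
  have "x \<noteq> 0"
    using nonmarking_child_not_contracted[OF V c0] by (simp add: x_def rot90_eq_0_iff edge_dir_eq_0_iff)
  have m_c0: "Mk m \<notin> c0"
  proof -
    have "{Mk m} \<noteq> c0" using c0(2) by (auto simp: is_marking_def)
    then show ?thesis using children_disjoint[OF V m c0(1)] by blast
  qed
  let ?wm = "\<lambda>k. wm0 k + mark_charge m (- x) k" and ?cf = "\<lambda>i. cf0 i + 0"
  have charge: "charge D F ?wm ?cf A = charge D F wm0 cf0 (A \<inter> c0) + (if Mk m \<in> A then - x else 0)"
    if "finite A" for A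
    using charge_add[of D F wm0 "mark_charge m (- x)" cf0 "\<lambda>_. 0" A]
      charge_mark_charge[OF that] rigid_charge_restrict[OF R0 that] by simp
  have charge_c0: "charge D F wm0 cf0 c0 = x" using R0 by (simp add: rigid_charge_def x_def)
  have "\<forall>A\<in>Es. charge D F ?wm ?cf A \<bullet> edge_dir D A = 0"
  proof
    fix A assume A: "A \<in> Es"
    consider "A \<subseteq> c0" "Mk m \<notin> A" | "c0 \<subseteq> A" "Mk m \<in> A" | "A \<inter> c0 = {}" "Mk m \<notin> A"
      using edge_vs_marked_sibling[OF V m c0(1) m_c0 A] by blast
    then show "charge D F ?wm ?cf A \<bullet> edge_dir D A = 0"
    proof cases
      case 1
      then show ?thesis using charge[OF finite_edge[OF A]] R0 A by (simp add: rigid_charge_def Int_absorb2)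
    next
      case 2
      then show ?thesis using charge[OF finite_edge[OF A]] charge_c0 by (simp add: Int_absorb1)
    next
      case 3
      then show ?thesis using charge[OF finite_edge[OF A]] by (simp add: charge_empty)
    qed
  qed
  moreover have "charge D F ?wm ?cf Lv = 0"
  proof -
    have "Lv \<inter> c0 = c0" "Mk m \<in> Lv"
      using child_psubset[OF c0(1)] child_psubset[OF m] vert_subset_root[OF V] root_subset_leaves by blast+
    then show ?thesis using charge[OF finite_leaves] charge_c0 by simp
  qed
  moreover have "wm0 m = 0" using R0 m_c0 by (simp add: rigid_charge_def)
  then have "charge_functional ?wm ?cf (PX m) \<noteq> 0 \<or> charge_functional ?wm ?cf (PY m) \<noteq> 0"
    using \<open>x \<noteq> 0\<close> by (cases x) (auto simp: charge_functional_def mark_charge_def zero_prod_def)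
  ultimately show False
    using no_balanced_charge marking_coords[OF marking_child_bound[OF V m]] by blast
qed

text \<open>A marking at the root could be balanced against a fixed reference end.\<close>
lemma marked_root_reference_end_free:
  assumes m: "{Mk m} \<in> ch R"
  shows "0 \<notin> F"
proof
  assume F0: "0 \<in> F"
  let ?wm = "\<lambda>k. mark_charge m (- end_normal D 0) k + 0" and ?cf = "\<lambda>i. 0 + end_charge 0 i"
  have charge: "charge D F ?wm ?cf A =
      (if Mk m \<in> A then - end_normal D 0 else 0) + (if En 0 \<in> A then end_normal D 0 else 0)"
    if "finite A" for A
    using charge_add[of D F "mark_charge m (- end_normal D 0)" "\<lambda>_. 0" "\<lambda>_. 0" "end_charge 0" A]
      charge_mark_charge[OF that] charge_end_charge[OF that F0] by simp
  have "\<forall>A\<in>Es. charge D F ?wm ?cf A \<bullet> edge_dir D A = 0"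
  proof
    fix A assume A: "A \<in> Es"
    have "Mk m \<notin> A"
    proof
      assume "Mk m \<in> A"
      then have "R \<subseteq> A" using mark_child_edge_iff[OF root_in_verts m A] by simp
      then show False using edge_psubset_root[OF A] by blast
    qed
    moreover have "En 0 \<notin> A" using edge_subset_root[OF A] En0_notin_root by blast
    ultimately show "charge D F ?wm ?cf A \<bullet> edge_dir D A = 0"
      using charge[OF finite_edge[OF A]] by simp
  qed
  moreover have "charge D F ?wm ?cf Lv = 0"
  proof -
    have "Mk m \<in> Lv" using child_psubset[OF m] root_subset_leaves by blast
    then show ?thesis using charge[OF finite_leaves] En0_in_leaves by simp
  qed
  moreover have "charge_functional ?wm ?cf (FL 0) \<noteq> 0"
    by (simp add: charge_functional_def end_charge_def)
  ultimately show False using no_balanced_charge fixed_end_coord[OF F0] by blast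
qed

text \<open>If every child of the root is rigid, so is the root side, and a fixed reference end
  would balance it.\<close>
lemma rigid_root_reference_end_free:
  assumes rigid: "\<forall>c\<in>ch R. \<not> is_marking c \<and> \<not> reaches_free_end c"
  shows "0 \<notin> F"
proof
  assume F0: "0 \<in> F"
  have "\<exists>wm cf. rigid_charge D F Es c wm cf" if "c \<in> ch R" for c
    using rigid_charge_exists[OF child_in_subtrees[OF root_in_verts that]] rigid that by blast
  then obtain wm cf where root: "rigid_charge D F Es R wm cf"
    using rigid_charge_rigid_children[OF root_in_verts] by blast
  let ?wm = "\<lambda>k. wm k + 0" and ?cf = "\<lambda>i. cf i + end_charge 0 i"
  have charge: "charge D F ?wm ?cf A = charge D F wm cf (A \<inter> R) + (if En 0 \<in> A then end_normal D 0 else 0)"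
    if "finite A" for A
    using charge_add[of D F wm "\<lambda>_. 0" cf "end_charge 0" A] charge_end_charge[OF that F0]
      rigid_charge_restrict[OF root that] by simp
  have "\<forall>A\<in>Es. charge D F ?wm ?cf A \<bullet> edge_dir D A = 0"
  proof
    fix A assume A: "A \<in> Es"
    then have "A \<inter> R = A" "En 0 \<notin> A" using edge_subset_root[OF A] En0_notin_root by blast+
    then show "charge D F ?wm ?cf A \<bullet> edge_dir D A = 0"
      using charge[OF finite_edge[OF A]] root A edge_subset_root[OF A] by (simp add: rigid_charge_def)
  qed
  moreover have "charge D F ?wm ?cf Lv = 0"
  proof -
    have "charge D F ?wm ?cf Lv = rot90 (edge_dir D R) + end_normal D 0"
      using charge[OF finite_leaves] En0_in_leaves root root_subset_leaves
      by (simp add: rigid_charge_def Int_absorb1)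
    also have "\<dots> = rot90 (edge_dir D R + edge_dir D {En 0})" by (simp add: end_normal_def rot90_add)
    also have "edge_dir D R + edge_dir D {En 0} = 0"
      by (simp add: edge_dir_def sigma_root sigma_En zero_prod_def)
    finally show ?thesis by (simp add: rot90_def zero_prod_def)
  qed
  moreover have "cf 0 = 0" using root En0_notin_root by (simp add: rigid_charge_def)
  then have "charge_functional ?wm ?cf (FL 0) \<noteq> 0"
    by (simp add: charge_functional_def end_charge_def)
  ultimately show False using no_balanced_charge fixed_end_coord[OF F0] by blast
qed

lemma orientation_defect_marked:
  assumes V: "V \<in> Vs" and m: "{Mk m} \<in> ch V"
  shows "orientation_defect V = 0"
proof -
  have "num_markings V \<noteq> 0"
    using m finite_children[OF V] by (auto simp: num_markings_def is_marking_def)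
  then have one: "num_markings V = 1" using num_markings_le_1[OF V] by simp
  have "\<not> points_up c" if c: "c \<in> ch V" for c
  proof (cases "is_marking c")
    case False
    then show ?thesis
      using marked_vertex_child_reaches_free_end[OF V m c False]
        points_up_subtree[OF child_in_subtrees[OF V c] False] by simp
  qed (simp add: points_up_def)
  moreover have "points_up V"
  proof (cases "V = R")
    case True
    then show ?thesis
      using marked_root_reference_end_free m root_not_marking by (simp add: points_up_def)
  next
    case False
    then have "V \<in> Es" using V by (simp add: verts_eq)
    moreover have "has_mark C V" using m by (auto simp: has_mark_def)
    ultimately show ?thesis
      using reaches_free_end_edge False edge_not_marking by (simp add: points_up_def)
  qed
  ultimately show ?thesis using one by (simp add: orientation_defect_def)
qed

lemma orientation_defect_unmarked_nonneg:
  assumes V: "V \<in> Vs" and unmarked: "num_markings V = 0"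
  shows "orientation_defect V \<ge> 0"
proof -
  have no_marking: "\<forall>c\<in>ch V. \<not> is_marking c"
    using unmarked finite_children[OF V] by (simp add: num_markings_def)
  have two: "card (ch V) = 2"
    using card_children[OF V] num_cplx_markings_le[OF V] unmarked by simp
  show ?thesis
  proof (cases "\<forall>c\<in>ch V. points_up c")
    case True
    then have rigid: "\<forall>c\<in>ch V. \<not> is_marking c \<and> \<not> reaches_free_end c"
      using no_marking points_up_subtree child_in_subtrees[OF V] by blast
    have "points_up V"
    proof (cases "V = R")
      case True
      then show ?thesis
        using rigid_root_reference_end_free rigid root_not_marking by (simp add: points_up_def)
    next
      case False
      then have "V \<in> Es" using V by (simp add: verts_eq)
      then show ?thesis
        using reaches_free_end_edge rigid False edge_not_marking by (auto simp: points_up_def)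
    qed
    then show ?thesis using True two unmarked by (simp add: orientation_defect_def)
  next
    case False
    then obtain c1 where c1: "c1 \<in> ch V" "\<not> points_up c1" by blast
    have "(\<Sum>c\<in>ch V. of_bool (points_up c) :: int) = (\<Sum>c\<in>ch V - {c1}. of_bool (points_up c))"
      using finite_children[OF V] c1 by (simp add: sum.remove del: sum_of_bool_eq)
    also have "\<dots> \<le> (\<Sum>c\<in>ch V - {c1}. 1)" by (rule sum_mono) simp
    also have "\<dots> = 1" using two c1(1) finite_children[OF V] by simp
    finally show ?thesis using unmarked by (simp add: orientation_defect_def)
  qed
qed

lemma orientation_defect_zero: "V \<in> Vs \<Longrightarrow> orientation_defect V = 0"
proof -
  assume V: "V \<in> Vs"
  have nonneg: "orientation_defect W \<ge> 0" if W: "W \<in> Vs" for W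
  proof (cases "num_markings W = 0")
    case False
    then obtain m where "{Mk m} \<in> ch W"
      using finite_children[OF W] by (auto simp: num_markings_def is_marking_def)
    then show ?thesis using orientation_defect_marked[OF W] by simp
  qed (use orientation_defect_unmarked_nonneg[OF W] in simp)
  have "(\<Sum>V\<in>Vs. orientation_defect V) = 0"
    using sum_orientation_defect card_edges_eq by simp
  then show ?thesis using sum_nonneg_eq_0_iff[OF finite_verts] nonneg V by blast
qed

lemma lengths_nonneg: "fst C A \<ge> 0"
  using desc by (simp add: is_desc_def is_curve_def)

definition oriented :: curve where
  "oriented = ((\<lambda>A. if A \<in> Es \<and> points_up A then - fst C A else fst C A), snd C)"

lemma edges_oriented: "edgesS oriented = Es"
  by (auto simp: edgesS_def oriented_def)

lemma unorient_oriented: "unorient oriented = C"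
proof -
  have "\<bar>fst oriented A\<bar> = fst C A" for A using lengths_nonneg[of A] by (simp add: oriented_def)
  then show ?thesis by (simp add: unorient_def oriented_def)
qed

lemma up_oriented_edge: "E \<in> Es \<Longrightarrow> up r s D F oriented E \<longleftrightarrow> points_up E"
  using edge_neq_root edge_neq_singleton lengths_nonneg[of E]
  by (auto simp: up_def oriented_def edgesS_def)

lemma up_oriented_root: "up r s D F oriented R \<longleftrightarrow> points_up R"
  using root_not_marking by (simp add: up_def points_up_def)

lemma up_oriented_vert: "V \<in> Vs \<Longrightarrow> up r s D F oriented V \<longleftrightarrow> points_up V"
  using up_oriented_edge up_oriented_root by (auto simp: verts_eq)

lemma up_oriented_child:
  assumes V: "V \<in> Vs" and c: "c \<in> ch V" "\<not> is_marking c"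
  shows "up r s D F oriented c \<longleftrightarrow> points_up c"
proof (cases "c \<in> Es")
  case False
  then obtain l where l: "c = {l}" "l \<in> R" using child_in_subtrees[OF V c(1)] by (auto simp: subtrees_def)
  then obtain i where i: "c = {En i}" using c(2) by (cases l) (auto simp: is_marking_def)
  have "i \<noteq> 0" using l i En0_notin_root by auto
  moreover have "c \<noteq> R" using l(1) root_neq_singleton by metis
  ultimately show ?thesis
    using i reaches_free_end_En by (auto simp: up_def points_up_def is_marking_def)
qed (rule up_oriented_edge)

lemma noncontr_at_eq:
  assumes V: "V \<in> Vs"
  shows "noncontr_at D C V = insert V {c \<in> ch V. \<not> is_marking c}"
  using vert_not_contracted[OF V] nonmarking_child_not_contracted[OF V]
  by (auto simp: noncontr_at_def edges_at_def is_marking_def sigma_Mk)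

lemma card_nonmarking_children:
  assumes V: "V \<in> Vs"
  shows "card {c \<in> ch V. \<not> is_marking c} + num_markings V = card (ch V)"
proof -
  have "ch V = {c \<in> ch V. \<not> is_marking c} \<union> {c \<in> ch V. is_marking c}" by blast
  then show ?thesis using finite_children[OF V] unfolding num_markings_def
    by (metis (no_types, lifting) card_Un_disjoint disjoint_iff finite_Un mem_Collect_eq)
qed

lemma card_noncontr_at:
  assumes V: "V \<in> Vs"
  shows "card (noncontr_at D C V) + num_markings V = card (ch V) + 1"
proof -
  have "V \<notin> {c \<in> ch V. \<not> is_marking c}" using child_psubset by blast
  then show ?thesis
    using noncontr_at_eq[OF V] card_nonmarking_children[OF V] finite_children[OF V] by simp
qed

lemma card_outgoing_oriented:
  assumes V: "V \<in> Vs"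
  shows "card {E \<in> noncontr_at D C V. outgoing r s D F oriented V E} + 1 = card (ch V) + num_markings V"
proof -
  let ?NM = "{c \<in> ch V. \<not> is_marking c}"
  let ?Z = "{c \<in> ?NM. \<not> points_up c}"
  have V_notin: "V \<notin> ch V" using child_psubset by blast
  have children_oriented: "children oriented = ch" by (rule children_cong[OF edges_oriented])
  have out_eq: "{E \<in> noncontr_at D C V. outgoing r s D F oriented V E} =
      (if points_up V then insert V ?Z else ?Z)"
  proof -
    have "outgoing r s D F oriented V V \<longleftrightarrow> points_up V"
      using up_oriented_vert[OF V] V_notin by (simp add: outgoing_def children_oriented)
    moreover have "outgoing r s D F oriented V c \<longleftrightarrow> \<not> points_up c" if "c \<in> ?NM" for c
      using that up_oriented_child[OF V] child_psubset[of c V]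
      by (auto simp: outgoing_def children_oriented)
    ultimately show ?thesis unfolding noncontr_at_eq[OF V] by auto
  qed
  have fin: "finite ?NM" using finite_children[OF V] by simp
  have "finite ?Z" using finite_children[OF V] by simp
  moreover have "V \<notin> ?Z" using V_notin by blast
  ultimately have "int (card {E \<in> noncontr_at D C V. outgoing r s D F oriented V E}) =
      of_bool (points_up V) + int (card ?Z)"
    unfolding out_eq by simp
  moreover have "(\<Sum>c\<in>ch V. of_bool (points_up c) :: int) = int (card ?NM) - int (card ?Z)"
  proof -
    have "(\<Sum>c\<in>ch V. of_bool (points_up c) :: int) = (\<Sum>c\<in>?NM. of_bool (points_up c))"
      using finite_children[OF V] by (intro sum.mono_neutral_right) (auto simp: points_up_def)
    also have "\<dots> = int (card ?NM) - int (card ?Z)"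
    proof -
      have "?NM = {c \<in> ?NM. points_up c} \<union> ?Z" "{c \<in> ?NM. points_up c} \<inter> ?Z = {}" by blast+
      then have "card ?NM = card {c \<in> ?NM. points_up c} + card ?Z"
        using fin by (metis (no_types, lifting) card_Un_disjoint finite_Un)
      then show ?thesis using fin by (simp add: Int_def)
    qed
    finally show ?thesis .
  qed
  moreover have "orientation_defect V = 0" by (rule orientation_defect_zero[OF V])
  ultimately show ?thesis
    using card_nonmarking_children[OF V] by (simp add: orientation_defect_def)
qed

lemma marked_vertex_all_outgoing_oriented:
  assumes V: "V \<in> Vs" and marked: "num_markings V = 1"
  shows "\<forall>E\<in>noncontr_at D C V. outgoing r s D F oriented V E"
proof -
  let ?OUT = "{E \<in> noncontr_at D C V. outgoing r s D F oriented V E}"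
  have "finite (noncontr_at D C V)" using noncontr_at_eq[OF V] finite_children[OF V] by simp
  moreover have "card ?OUT = card (noncontr_at D C V)"
    using card_outgoing_oriented[OF V] card_noncontr_at[OF V] marked by simp
  ultimately have "?OUT = noncontr_at D C V" using card_subset_eq[of _ ?OUT] by blast
  then show ?thesis by blast
qed

lemma oriented_vertex_type:
  assumes V: "V \<in> Vs"
  shows "typeI r s D F oriented V \<or> typeII r s D F oriented V \<or> typeIII r s D F oriented V"
proof -
  have same: "edges_at oriented = edges_at C" "noncontr_at D oriented = noncontr_at D C"
    "has_real_mark r oriented = has_real_mark r C" "has_cplx_mark r s oriented = has_cplx_mark r s C"
    "has_mark oriented = has_mark C"
    using edges_at_cong noncontr_at_cong marks_cong edges_oriented by metis+
  have out: "card {E \<in> noncontr_at D C V. outgoing r s D F oriented V E} + 1 = card (ch V) + num_markings V"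
    by (rule card_outgoing_oriented[OF V])
  have nc: "card (noncontr_at D C V) + num_markings V = card (ch V) + 1" by (rule card_noncontr_at[OF V])
  have ea: "card (edges_at C V) = card (ch V) + 1" by (rule card_edges_at[OF V])
  have cc: "card (ch V) = 2 + num_cplx_markings V" by (rule card_children[OF V])
  consider "num_markings V = 0" | "num_markings V = 1" using num_markings_le_1[OF V] by linarith
  then show ?thesis
  proof cases
    case 1
    then have "\<not> has_mark C V"
      using finite_children[OF V] by (auto simp: num_markings_def has_mark_iff)
    moreover have "num_cplx_markings V = 0" using num_cplx_markings_le[OF V] 1 by simp
    ultimately have "typeII r s D F oriented V" using out nc ea cc 1 by (simp add: typeII_def same)
    then show ?thesis by blast
  next
    case 2
    note all_out = marked_vertex_all_outgoing_oriented[OF V 2]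
    have "num_markings V \<noteq> 0" using 2 by simp
    then obtain a where a: "{Mk a} \<in> ch V"
      using finite_children[OF V] by (auto simp: num_markings_def is_marking_def)
    show ?thesis
    proof (cases "num_cplx_markings V = 0")
      case True
      then have "\<not> is_cplx_marking r s {Mk a}"
        using a finite_children[OF V] by (auto simp: num_cplx_markings_def)
      then have "a < r" using marking_child_bound[OF V a] by (auto simp: is_cplx_marking_def)
      then have "has_real_mark r C V" using a by (auto simp: has_real_mark_def)
      then have "typeI r s D F oriented V" using nc ea cc 2 True all_out by (simp add: typeI_def same)
      then show ?thesis by blast
    next
      case False
      then have cplx: "num_cplx_markings V = 1" using num_cplx_markings_le[OF V] 2 by simp
      have "{c \<in> ch V. is_cplx_marking r s c} \<noteq> {}"
        using False unfolding num_cplx_markings_def by (metis card.empty)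
      then have "has_cplx_mark r s C V" by (auto simp: has_cplx_mark_iff)
      then have "typeIII r s D F oriented V" using nc ea cc 2 cplx all_out by (simp add: typeIII_def same)
      then show ?thesis by blast
    qed
  qed
qed

lemma oriented_is_rbroccoli: "is_rbroccoli r s D F oriented"
proof -
  have "is_or_curve r s D oriented"
  proof -
    have "is_curve_data r s D oriented" using curve_data curve_data_cong[OF edges_oriented] by simp
    moreover have "fst oriented A \<ge> 0" if "sigma D A = (0,0)" for A
      using that edge_not_contracted lengths_nonneg[of A] by (auto simp: oriented_def)
    ultimately show ?thesis by (simp add: is_or_curve_def)
  qed
  then show ?thesis
    using oriented_vertex_type verts_cong[OF edges_oriented] by (simp add: is_rbroccoli_def)
qed

end

section \<open>Forgetting the orientation of a broccoli curve\<close>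

locale broccoli_curve = curve_tree +
  assumes rbroccoli: "is_rbroccoli r s D F C"

lemma broccoli_curveI:
  "is_rbroccoli r s D F C \<Longrightarrow> D \<noteq> [] \<Longrightarrow> F \<subseteq> {..<length D} \<Longrightarrow> broccoli_curve r s D F C"
  by unfold_locales (auto simp: is_rbroccoli_def is_or_curve_def)

context broccoli_curve
begin

lemma vertex_type: "V \<in> Vs \<Longrightarrow> typeI r s D F C V \<or> typeII r s D F C V \<or> typeIII r s D F C V"
  using rbroccoli by (simp add: is_rbroccoli_def)

lemma finite_edges_at: "V \<in> Vs \<Longrightarrow> finite (edges_at C V)"
  using finite_children by (simp add: edges_at_def)

lemma child_in_edges_at: "c \<in> ch V \<Longrightarrow> c \<in> edges_at C V"
  by (simp add: edges_at_def)

lemma two_contracted: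
  assumes V: "V \<in> Vs" and a: "a \<in> edges_at C V" "sigma D a = (0,0)"
    and b: "b \<in> edges_at C V" "sigma D b = (0,0)" and "a \<noteq> b"
  shows "card (noncontr_at D C V) + 2 \<le> card (edges_at C V)"
proof -
  have "noncontr_at D C V \<subseteq> edges_at C V - {a, b}" using a b by (auto simp: noncontr_at_def)
  then have "card (noncontr_at D C V) \<le> card (edges_at C V - {a, b})"
    using finite_edges_at[OF V] by (intro card_mono) auto
  also have "\<dots> = card (edges_at C V) - 2"
    using a(1) b(1) \<open>a \<noteq> b\<close> finite_edges_at[OF V] by (subst card_Diff_subset) auto
  finally have "card (noncontr_at D C V) \<le> card (edges_at C V) - 2" .
  moreover have "card {a, b} \<le> card (edges_at C V)"
    using a(1) b(1) finite_edges_at[OF V] by (intro card_mono) auto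
  ultimately show ?thesis using \<open>a \<noteq> b\<close> by simp
qed

lemma two_markings_not_broccoli:
  assumes V: "V \<in> Vs" and "{Mk i} \<in> ch V" "{Mk j} \<in> ch V" "i \<noteq> j"
    and "card (noncontr_at D C V) + 1 = card (edges_at C V)"
  shows False
  using two_contracted[OF V child_in_edges_at[OF assms(2)] sigma_Mk child_in_edges_at[OF assms(3)] sigma_Mk]
    assms(4,5) by simp

lemma unorient_is_desc: "is_desc r s D (unorient C)"
proof -
  have same: "edgesS (unorient C) = Es" by (rule edgesS_unorient)
  have real: "card (edges_at C V) = 3" if V: "V \<in> Vs" and i: "i < r" "{Mk i} \<in> ch V" for i V
  proof -
    have "\<not> typeII r s D F C V" using i by (auto simp: typeII_def has_mark_def)
    moreover have "\<not> typeIII r s D F C V"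
    proof
      assume t: "typeIII r s D F C V"
      then obtain j where j: "r \<le> j" "{Mk j} \<in> ch V" by (auto simp: typeIII_def has_cplx_mark_def)
      then have "i \<noteq> j" using i(1) by simp
      then show False using two_markings_not_broccoli[OF V i(2) j(2)] t by (simp add: typeIII_def)
    qed
    ultimately show ?thesis using vertex_type[OF V] by (auto simp: typeI_def)
  qed
  have cplx: "card (edges_at C V) = 4" if V: "V \<in> Vs" and i: "r \<le> i" "{Mk i} \<in> ch V" for i V
  proof -
    have "\<not> typeII r s D F C V" using i by (auto simp: typeII_def has_mark_def)
    moreover have "\<not> typeI r s D F C V"
    proof
      assume t: "typeI r s D F C V"
      then obtain j where j: "j < r" "{Mk j} \<in> ch V" by (auto simp: typeI_def has_real_mark_def)
      then have "i \<noteq> j" using i(1) by simp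
      then show False using two_markings_not_broccoli[OF V i(2) j(2)] t by (simp add: typeI_def)
    qed
    ultimately show ?thesis using vertex_type[OF V] by (auto simp: typeIII_def)
  qed
  have "is_curve r s D (unorient C)"
    using curve_data curve_data_cong[OF same] by (simp add: is_curve_def unorient_def)
  then show ?thesis
    using real cplx unfolding is_desc_def verts_cong[OF same] children_cong[OF same] edges_at_cong[OF same]
    by blast
qed

lemma mC_or_eq_mC_un_unorient: "mC_or r s D F y C = mC_un r s D F y (unorient C)"
proof -
  have same: "edgesS (unorient C) = Es" by (rule edgesS_unorient)
  have "mV_or r s D F y C V = mV_un r s D y (unorient C) V" if V: "V \<in> Vs" for V
  proof -
    have ea: "edges_at (unorient C) V = edges_at C V" using edges_at_cong[OF same] by simp
    have mk: "has_real_mark r (unorient C) V = has_real_mark r C V"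
      "has_cplx_mark r s (unorient C) V = has_cplx_mark r s C V" "has_mark (unorient C) V = has_mark C V"
      using marks_cong[OF same] by auto
    have mi: "mik D (unorient C) V = mik D C V" using mik_cong[OF same] by simp
    have hr: "has_real_mark r C V \<Longrightarrow> has_mark C V" by (auto simp: has_real_mark_def has_mark_def)
    consider "typeI r s D F C V" | "\<not> typeI r s D F C V" "typeII r s D F C V"
      | "\<not> typeI r s D F C V" "\<not> typeII r s D F C V" "typeIII r s D F C V"
      using vertex_type[OF V] by blast
    then show ?thesis
    proof cases
      case 1 then show ?thesis by (simp add: mV_or_def mV_un_def typeI_def ea mk)
    next
      case 2 then show ?thesis using hr by (auto simp: mV_or_def mV_un_def typeII_def ea mk mi)
    next
      case 3 then show ?thesis by (simp add: mV_or_def mV_un_def typeIII_def ea mk mi)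
    qed
  qed
  moreover have "verts r s n (unorient C) = Vs" by (rule verts_cong[OF same])
  ultimately show ?thesis unfolding mC_or_def mC_un_def by (metis (no_types, lifting) prod.cong)
qed

lemma vert_in_noncontr_at:
  assumes V: "V \<in> Vs"
  shows "V \<in> noncontr_at D C V"
proof (rule ccontr)
  assume nc: "V \<notin> noncontr_at D C V"
  have V_at: "V \<in> edges_at C V" by (simp add: edges_at_def)
  then have contracted: "sigma D V = (0,0)" using nc by (simp add: noncontr_at_def)
  have V_notin: "V \<notin> ch V" using child_psubset by blast
  consider "typeI r s D F C V" | "typeII r s D F C V" | "typeIII r s D F C V" using vertex_type[OF V] by blast
  then show False
  proof cases
    case 1
    then obtain j where j: "{Mk j} \<in> ch V" by (auto simp: typeI_def has_real_mark_def)
    have "{Mk j} \<noteq> V" using j V_notin by blast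
    from two_contracted[OF V child_in_edges_at[OF j] sigma_Mk V_at contracted this] 1
    show False by (simp add: typeI_def)
  next
    case 2
    have "noncontr_at D C V \<subseteq> edges_at C V" by (auto simp: noncontr_at_def)
    moreover have "card (noncontr_at D C V) = card (edges_at C V)" using 2 by (simp add: typeII_def)
    ultimately have "noncontr_at D C V = edges_at C V" using card_subset_eq finite_edges_at[OF V] by blast
    then show False using nc V_at by simp
  next
    case 3
    then obtain j where j: "{Mk j} \<in> ch V" by (auto simp: typeIII_def has_cplx_mark_def)
    have "{Mk j} \<noteq> V" using j V_notin by blast
    from two_contracted[OF V child_in_edges_at[OF j] sigma_Mk V_at contracted this] 3
    show False by (simp add: typeIII_def)
  qed
qed

lemma marked_edge_points_up:
  assumes E: "E \<in> Es" and marked: "has_mark C E"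
  shows "fst C E < 0"
proof -
  have E_vert: "E \<in> Vs" using E by (simp add: verts_eq)
  have "typeI r s D F C E \<or> typeIII r s D F C E"
    using vertex_type[OF E_vert] marked by (auto simp: typeII_def)
  then have "\<forall>x\<in>noncontr_at D C E. outgoing r s D F C E x" by (auto simp: typeI_def typeIII_def)
  then have "outgoing r s D F C E E" using vert_in_noncontr_at[OF E_vert] by blast
  then show ?thesis
    using edge_neq_root[OF E] edge_neq_singleton[OF E] by (auto simp: outgoing_def up_def children_def)
qed

text \<open>An unmarked vertex has exactly one outgoing edge, so the orientation of its parent edge
  is forced by those of its children.\<close>
lemma unmarked_parent_orientation_forced:
  assumes C2: "broccoli_curve r s D F C2" "edgesS C2 = Es" and E: "E \<in> Es" "\<not> has_mark C E"
    and children: "\<forall>c\<in>ch E. up r s D F C c = up r s D F C2 c"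
  shows "(fst C E < 0) = (fst C2 E < 0)"
proof -
  have E_vert: "E \<in> Vs" using E by (simp add: verts_eq)
  have ch2: "children C2 = ch" by (rule children_cong[OF C2(2)])
  have nc2: "noncontr_at D C2 = noncontr_at D C" by (rule noncontr_at_cong[OF C2(2)])
  have up_E: "up r s D F C' E = (fst C' E < 0)" for C'
    using edge_neq_root[OF E(1)] edge_neq_singleton[OF E(1)] by (auto simp: up_def)
  have out_c: "outgoing r s D F C E c = outgoing r s D F C2 E c" if "c \<noteq> E" for c
    using children that by (auto simp: outgoing_def ch2)
  have out_E: "outgoing r s D F C' E E = (fst C' E < 0)" for C'
    using up_E by (auto simp: outgoing_def children_def)
  let ?NC = "noncontr_at D C E"
  have E_NC: "E \<in> ?NC" by (rule vert_in_noncontr_at[OF E_vert])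
  have "typeII r s D F C E" using vertex_type[OF E_vert] E(2)
    by (auto simp: typeI_def typeIII_def has_mark_def has_real_mark_def has_cplx_mark_def)
  then have one: "card {x\<in>?NC. outgoing r s D F C E x} = 1" by (simp add: typeII_def)
  have "typeI r s D F C2 E \<or> typeII r s D F C2 E \<or> typeIII r s D F C2 E"
    using broccoli_curve.vertex_type[OF C2(1), of E] verts_cong[OF C2(2)] E_vert by simp
  then have "typeII r s D F C2 E" using E(2)
    by (auto simp: typeI_def typeIII_def has_mark_def has_real_mark_def has_cplx_mark_def ch2)
  then have one2: "card {x\<in>?NC. outgoing r s D F C2 E x} = 1" using nc2 by (simp add: typeII_def)
  let ?O = "{x\<in>?NC - {E}. outgoing r s D F C E x}"
  have "finite ?O" using finite_edges_at[OF E_vert] by (auto simp: noncontr_at_def)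
  then have card_O: "card (insert E ?O) = card ?O + 1" by simp
  have "{x\<in>?NC. outgoing r s D F C E x} = (if fst C E < 0 then insert E ?O else ?O)"
    using E_NC out_E[of C] by auto
  moreover have "{x\<in>?NC. outgoing r s D F C2 E x} = (if fst C2 E < 0 then insert E ?O else ?O)"
  proof (rule set_eqI)
    fix x
    show "x \<in> {x\<in>?NC. outgoing r s D F C2 E x} \<longleftrightarrow> x \<in> (if fst C2 E < 0 then insert E ?O else ?O)"
      using E_NC out_E[of C2] out_c[of x] by (cases "x = E") auto
  qed
  ultimately show ?thesis using one one2 card_O by (cases "fst C E < 0"; cases "fst C2 E < 0") auto
qed

lemma orientation_signs_agree:
  assumes C2: "broccoli_curve r s D F C2" "edgesS C2 = Es" and "E \<in> Es"
  shows "(fst C E < 0) = (fst C2 E < 0)"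
  using \<open>E \<in> Es\<close>
proof (induction "card E" arbitrary: E rule: less_induct)
  case (less E)
  show ?case
  proof (cases "has_mark C E")
    case True
    then show ?thesis
      using marked_edge_points_up broccoli_curve.marked_edge_points_up[OF C2(1)] less.prems C2(2)
        marks_cong(3)[OF C2(2)] by metis
  next
    case False
    have "up r s D F C c = up r s D F C2 c" if c: "c \<in> ch E" for c
    proof (cases "c \<in> Es")
      case True
      have "card c < card E"
        using child_psubset[OF c] finite_edge[OF less.prems] by (simp add: psubset_card_mono)
      then show ?thesis
        using less.hyps True edge_neq_root[OF True] edge_neq_singleton[OF True] by (auto simp: up_def)
    next
      case False
      then have "fst C c = 0" "fst C2 c = 0" using C2(2) by (auto simp: edgesS_def)
      then show ?thesis by (simp add: up_def)
    qed
    then show ?thesis using unmarked_parent_orientation_forced[OF C2 less.prems False] by blast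
  qed
qed

lemma orientation_unique:
  assumes C2: "is_rbroccoli r s D F C2" and same: "unorient C2 = unorient C"
  shows "C2 = C"
proof -
  have edges2: "edgesS C2 = Es" using same edgesS_unorient by metis
  have C2_broccoli: "broccoli_curve r s D F C2"
    using C2 ends_nonempty fixed_ends by (rule broccoli_curveI)
  have "fst C2 A = fst C A" for A
  proof (cases "A \<in> Es")
    case True
    have "\<bar>fst C2 A\<bar> = \<bar>fst C A\<bar>" using arg_cong[OF same, of "\<lambda>X. fst X A"] by (simp add: unorient_def)
    moreover have "fst C A \<noteq> 0" using True by (simp add: edgesS_def)
    ultimately show ?thesis using orientation_signs_agree[OF C2_broccoli edges2 True]
      by (cases "fst C A < 0"; cases "fst C2 A < 0") auto
  next
    case False
    then show ?thesis using edges2 by (auto simp: edgesS_def)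
  qed
  moreover have "snd C2 = snd C" using arg_cong[OF same, of snd] by (simp add: unorient_def)
  ultimately show ?thesis by (simp add: prod_eq_iff fun_eq_iff)
qed

end

section \<open>The correspondence\<close>

lemma desc_has_broccoli_orientation:
  assumes F: "F \<subseteq> {..<length D}" and dim: "r + 2 * s + card F + 1 = length D"
    and gp: "gen_pos r s D F (M_desc_closure r s D) P"
    and C: "is_desc r s D C" "ev r s D F C = P"
  shows "\<exists>C'. is_rbroccoli r s D F C' \<and> unorient C' = C"
proof -
  interpret curve_tree r s D F C
    using C(1) F dim by unfold_locales (auto simp: is_desc_def is_curve_def)
  interpret desc_in_general_position r s D F C
    using C dim cell_tangents_full_rank[OF C gp finite_edges] by unfold_locales auto
  show ?thesis using oriented_is_rbroccoli unorient_oriented by blast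
qed

lemma unorient_bij_betw:
  assumes F: "F \<subseteq> {..<length D}" and dim: "r + 2 * s + card F + 1 = length D"
    and gp: "gen_pos r s D F (M_desc_closure r s D) P"
  shows "bij_betw unorient {C. is_rbroccoli r s D F C \<and> ev r s D F C = P}
    {C. is_desc r s D C \<and> ev r s D F C = P}" (is "bij_betw _ ?RB ?DS")
proof -
  have "D \<noteq> []" using dim by auto
  then have broccoli: "broccoli_curve r s D F C" if "C \<in> ?RB" for C
    using that F broccoli_curveI by blast
  have "inj_on unorient ?RB"
    using broccoli broccoli_curve.orientation_unique by (metis (no_types, lifting) inj_onI mem_Collect_eq)
  moreover have "unorient ` ?RB \<subseteq> ?DS"
    using broccoli broccoli_curve.unorient_is_desc ev_unorient by fastforce
  moreover have "C \<in> unorient ` ?RB" if C: "C \<in> ?DS" for C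
  proof -
    obtain C' where "is_rbroccoli r s D F C'" "unorient C' = C"
      using desc_has_broccoli_orientation[OF F dim gp] C by blast
    then show ?thesis using C ev_unorient[of r s D F C'] by force
  qed
  ultimately show ?thesis unfolding bij_betw_def by blast
qed

theorem corollary3p23:
  fixes r s :: nat and D :: "(int \<times> int) list" and F :: "nat set"
    and P :: "evidx \<Rightarrow> real" and y :: real
  assumes "F \<subseteq> {..<length D}"
    and "r + 2 * s + card F + 1 = length D"
    and "gen_pos r s D F (M_desc_closure r s D) P"
    and "gen_pos r s D F (M_rB r s D F) P"
    and "y > 0" and "y \<noteq> 1"
  shows "N_desc r s y D F P = N_rB r s y D F P"
proof -
  let ?RB = "{C. is_rbroccoli r s D F C \<and> ev r s D F C = P}"
  let ?DS = "{C. is_desc r s D C \<and> ev r s D F C = P}"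
  have "D \<noteq> []" using assms(2) by auto
  then have "mC_or r s D F y C = mC_un r s D F y (unorient C)" if "C \<in> ?RB" for C
    using that assms(1) broccoli_curveI broccoli_curve.mC_or_eq_mC_un_unorient by blast
  then have "(\<Sum>C\<in>?RB. mC_or r s D F y C) = (\<Sum>C\<in>?RB. mC_un r s D F y (unorient C))"
    by (rule sum.cong[OF refl])
  also have "\<dots> = (\<Sum>C\<in>?DS. mC_un r s D F y C)"
    by (rule sum.reindex_bij_betw[OF unorient_bij_betw[OF assms(1-3)]])
  finally show ?thesis unfolding N_desc_def N_rB_def by simp
qed

end
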